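(* Let $A$ be an Artin algebra, $k\ge1$ an integer and $\mathcal C_1,\dots,\mathcal C_k$ subcategories of $A\text{-mod}$. Then $$\max\{\operatorname{ed}\mathcal C_i\mid 1\le i\le k\}\le\operatorname{ed}(\mathcal C_1\bullet\mathcal C_2\bullet\cdots\bullet\mathcal C_k)\le\sum_{i=1}^k\operatorname{ed}\mathcal C_i+k-1.$$
   Context: Subcategories are full, additive and closed under isomorphisms. For subcategories $\mathcal T_1,\mathcal T_2$, $\mathcal T_1\bullet\mathcal T_2:=\operatorname{add}\{X\mid\exists$ exact $0\to T_1\to X\to T_2\to0$, $T_i\in\mathcal T_i\}$ ($\operatorname{add}$ = closure under finite direct sums and direct summands); $\bullet$ is associative. For a module $T$: $[T]_0=\{0\}$, $[T]_1=\operatorname{add}(T)$, $[T]_n=[T]_1\bullet[T]_{n-1}$. $\operatorname{ed}\mathcal C=\inf\{n\ge0\mid\mathcal C\subseteq[T]_{n+1}$ for some $T\in A\text{-mod}\}$. *)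

theory Defs
  imports "HOL-Algebra.Module" "HOL-Algebra.Ideal" "HOL-Library.Extended_Nat"
begin

definition artinian_cring :: "'a ring \<Rightarrow> bool" where
  "artinian_cring R \<longleftrightarrow> cring R \<and>
     (\<forall>I :: nat \<Rightarrow> 'a set. (\<forall>n. ideal (I n) R \<and> I (Suc n) \<subseteq> I n) \<longrightarrow> (\<exists>N. \<forall>n\<ge>N. I n = I N))"

definition artin_algebra :: "'a ring \<Rightarrow> bool" where
  "artin_algebra A \<longleftrightarrow> ring A \<and>
     (\<exists>(R :: 'a ring) \<phi>. artinian_cring R \<and> \<phi> \<in> ring_hom R A \<and>
        (\<forall>r\<in>carrier R. \<forall>a\<in>carrier A. \<phi> r \<otimes>\<^bsub>A\<^esub> a = a \<otimes>\<^bsub>A\<^esub> \<phi> r) \<and>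
        (\<exists>S. finite S \<and> S \<subseteq> carrier A \<and>
           (\<forall>a\<in>carrier A. \<exists>f\<in>S \<rightarrow> carrier R. a = finsum A (\<lambda>s. \<phi> (f s) \<otimes>\<^bsub>A\<^esub> s) S)))"

definition left_module :: "'a ring \<Rightarrow> ('a, 'b) module \<Rightarrow> bool" where
  "left_module A M \<longleftrightarrow> ring A \<and> abelian_group M \<and>
     (\<forall>a\<in>carrier A. \<forall>x\<in>carrier M. a \<odot>\<^bsub>M\<^esub> x \<in> carrier M) \<and>
     (\<forall>a\<in>carrier A. \<forall>b\<in>carrier A. \<forall>x\<in>carrier M.
        (a \<oplus>\<^bsub>A\<^esub> b) \<odot>\<^bsub>M\<^esub> x = (a \<odot>\<^bsub>M\<^esub> x) \<oplus>\<^bsub>M\<^esub> (b \<odot>\<^bsub>M\<^esub> x)) \<and>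
     (\<forall>a\<in>carrier A. \<forall>x\<in>carrier M. \<forall>y\<in>carrier M.
        a \<odot>\<^bsub>M\<^esub> (x \<oplus>\<^bsub>M\<^esub> y) = (a \<odot>\<^bsub>M\<^esub> x) \<oplus>\<^bsub>M\<^esub> (a \<odot>\<^bsub>M\<^esub> y)) \<and>
     (\<forall>a\<in>carrier A. \<forall>b\<in>carrier A. \<forall>x\<in>carrier M.
        (a \<otimes>\<^bsub>A\<^esub> b) \<odot>\<^bsub>M\<^esub> x = a \<odot>\<^bsub>M\<^esub> (b \<odot>\<^bsub>M\<^esub> x)) \<and>
     (\<forall>x\<in>carrier M. \<one>\<^bsub>A\<^esub> \<odot>\<^bsub>M\<^esub> x = x)"

definition fin_gen :: "'a ring \<Rightarrow> ('a, 'b) module \<Rightarrow> bool" where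
  "fin_gen A M \<longleftrightarrow> (\<exists>S. finite S \<and> S \<subseteq> carrier M \<and>
     (\<forall>x\<in>carrier M. \<exists>f\<in>S \<rightarrow> carrier A. x = finsum M (\<lambda>s. f s \<odot>\<^bsub>M\<^esub> s) S))"

text \<open>Every finitely generated A-module is a quotient of some A^n, hence isomorphic to a module
  whose elements are sets of lists over the element type of A. We therefore take A-mod to be
  the class of finitely generated left A-modules with carrier type 'a list set (everything
  below is closed under isomorphism).\<close>

type_synonym 'a amod = "('a, 'a list set) module"

definition Amod :: "'a ring \<Rightarrow> 'a amod set" where
  "Amod A = {M. left_module A M \<and> fin_gen A M}"

definition mod_hom :: "'a ring \<Rightarrow> ('a, 'b) module \<Rightarrow> ('a, 'c) module \<Rightarrow> ('b \<Rightarrow> 'c) \<Rightarrow> bool" where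
  "mod_hom A M N f \<longleftrightarrow> f \<in> carrier M \<rightarrow> carrier N \<and>
     (\<forall>x\<in>carrier M. \<forall>y\<in>carrier M. f (x \<oplus>\<^bsub>M\<^esub> y) = f x \<oplus>\<^bsub>N\<^esub> f y) \<and>
     (\<forall>a\<in>carrier A. \<forall>x\<in>carrier M. f (a \<odot>\<^bsub>M\<^esub> x) = a \<odot>\<^bsub>N\<^esub> f x)"

definition mod_iso :: "'a ring \<Rightarrow> ('a, 'b) module \<Rightarrow> ('a, 'c) module \<Rightarrow> bool" where
  "mod_iso A M N \<longleftrightarrow> (\<exists>f. mod_hom A M N f \<and> bij_betw f (carrier M) (carrier N))"

definition zero_mod :: "('a, 'b) module \<Rightarrow> bool" where
  "zero_mod M \<longleftrightarrow> carrier M = {\<zero>\<^bsub>M\<^esub>}"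

definition is_biprod :: "'a ring \<Rightarrow> ('a, 'b) module \<Rightarrow> ('a, 'b) module \<Rightarrow> ('a, 'b) module \<Rightarrow> bool" where
  "is_biprod A X Y Z \<longleftrightarrow> (\<exists>i1 i2 p1 p2.
     mod_hom A Y X i1 \<and> mod_hom A Z X i2 \<and> mod_hom A X Y p1 \<and> mod_hom A X Z p2 \<and>
     (\<forall>y\<in>carrier Y. p1 (i1 y) = y) \<and> (\<forall>z\<in>carrier Z. p2 (i2 z) = z) \<and>
     (\<forall>z\<in>carrier Z. p1 (i2 z) = \<zero>\<^bsub>Y\<^esub>) \<and> (\<forall>y\<in>carrier Y. p2 (i1 y) = \<zero>\<^bsub>Z\<^esub>) \<and>
     (\<forall>x\<in>carrier X. i1 (p1 x) \<oplus>\<^bsub>X\<^esub> i2 (p2 x) = x))"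

inductive_set dsums :: "'a ring \<Rightarrow> 'a amod set \<Rightarrow> 'a amod set" for A S where
  dsums_zero: "M \<in> Amod A \<Longrightarrow> zero_mod M \<Longrightarrow> M \<in> dsums A S"
| dsums_step: "Y \<in> dsums A S \<Longrightarrow> Z \<in> S \<Longrightarrow> X \<in> Amod A \<Longrightarrow> is_biprod A X Y Z \<Longrightarrow> X \<in> dsums A S"

definition addc :: "'a ring \<Rightarrow> 'a amod set \<Rightarrow> 'a amod set" where
  "addc A S = {X \<in> Amod A. \<exists>Y\<in>dsums A S. \<exists>Z\<in>Amod A. is_biprod A Y X Z}"

definition ses :: "'a ring \<Rightarrow> 'a amod \<Rightarrow> 'a amod \<Rightarrow> 'a amod \<Rightarrow> bool" where
  "ses A X Y Z \<longleftrightarrow> (\<exists>f g. mod_hom A X Y f \<and> mod_hom A Y Z g \<and>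
     inj_on f (carrier X) \<and> g ` carrier Y = carrier Z \<and>
     f ` carrier X = {y \<in> carrier Y. g y = \<zero>\<^bsub>Z\<^esub>})"

definition bullet :: "'a ring \<Rightarrow> 'a amod set \<Rightarrow> 'a amod set \<Rightarrow> 'a amod set" where
  "bullet A T1 T2 = addc A {X \<in> Amod A. \<exists>M1\<in>T1. \<exists>M2\<in>T2. ses A M1 X M2}"

text \<open>C_1 \<bullet> C_2 \<bullet> ... \<bullet> C_k for a nonempty list [C_1,...,C_k] (right-nested; \<bullet> is associative).\<close>

fun bullets :: "'a ring \<Rightarrow> 'a amod set list \<Rightarrow> 'a amod set" where
  "bullets A [] = {M \<in> Amod A. zero_mod M}"
| "bullets A [C] = C"
| "bullets A (C # D # Cs) = bullet A C (bullets A (D # Cs))"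

fun layer :: "'a ring \<Rightarrow> 'a amod \<Rightarrow> nat \<Rightarrow> 'a amod set" where
  "layer A T 0 = {M \<in> Amod A. zero_mod M}"
| "layer A T (Suc 0) = addc A {T}"
| "layer A T (Suc (Suc n)) = bullet A (addc A {T}) (layer A T (Suc n))"

definition ed :: "'a ring \<Rightarrow> 'a amod set \<Rightarrow> enat" where
  "ed A C = Inf {enat n | n. \<exists>T\<in>Amod A. C \<subseteq> layer A T (n + 1)}"

definition subcat :: "'a ring \<Rightarrow> 'a amod set \<Rightarrow> bool" where
  "subcat A C \<longleftrightarrow> C \<subseteq> Amod A \<and>
     (\<forall>X\<in>C. \<forall>Y\<in>Amod A. mod_iso A X Y \<longrightarrow> Y \<in> C) \<and>
     (\<forall>M\<in>Amod A. zero_mod M \<longrightarrow> M \<in> C) \<and>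
     (\<forall>Y\<in>C. \<forall>Z\<in>C. \<forall>X\<in>Amod A. is_biprod A X Y Z \<longrightarrow> X \<in> C)"

end

theory Submission
  imports Defs
begin

text \<open>The lower bound holds because each C_i is contained in C_1 \<bullet> ... \<bullet> C_k (extend by zero
  modules) and ed is monotone. For the upper bound pick T_i with C_i \<subseteq> [T_i]_(n_i + 1), where
  n_i = ed C_i, and let T be the direct sum of the T_i, so that [T_i]_m \<subseteq> [T]_m. The inclusion
  (X \<bullet> Y) \<bullet> Z \<subseteq> X \<bullet> (Y \<bullet> Z) gives [T]_a \<bullet> [T]_b \<subseteq> [T]_(a + b), hence
  C_1 \<bullet> ... \<bullet> C_k \<subseteq> [T]_(\<Sum>(n_i + 1)) and ed (C_1 \<bullet> ... \<bullet> C_k) \<le> \<Sum>n_i + k - 1.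

  That inclusion comes from splicing short exact sequences: if 0 \<rightarrow> X0 \<rightarrow> W \<rightarrow> Y0 \<rightarrow> 0 and
  0 \<rightarrow> W \<rightarrow> M \<rightarrow> V \<rightarrow> 0 are exact, the cokernel Q of X0 \<rightarrow> M is an extension of V by Y0, so
  M is an extension of Q \<in> Y \<bullet> Z by X0; direct summands are absorbed by adding the complement
  to the middle terms. The additive closure add S is handled through the characterisation of
  its objects as the modules whose identity is a finite sum of endomorphisms factoring through
  objects of S.\<close>

section \<open>Left modules and their homomorphisms\<close>

lemma lmod_abelian_group: "left_module A M \<Longrightarrow> abelian_group M"
  by (simp add: left_module_def)

lemma lmod_ring: "left_module A M \<Longrightarrow> ring A"
  by (simp add: left_module_def)

lemma lmod_smult_closed [simp, intro]:
  "left_module A M \<Longrightarrow> a \<in> carrier A \<Longrightarrow> x \<in> carrier M \<Longrightarrow> a \<odot>\<^bsub>M\<^esub> x \<in> carrier M"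
  by (simp add: left_module_def)

lemma lmod_smult_l_distr:
  "left_module A M \<Longrightarrow> a \<in> carrier A \<Longrightarrow> b \<in> carrier A \<Longrightarrow> x \<in> carrier M \<Longrightarrow>
    (a \<oplus>\<^bsub>A\<^esub> b) \<odot>\<^bsub>M\<^esub> x = (a \<odot>\<^bsub>M\<^esub> x) \<oplus>\<^bsub>M\<^esub> (b \<odot>\<^bsub>M\<^esub> x)"
  by (simp add: left_module_def)

lemma lmod_smult_r_distr:
  "left_module A M \<Longrightarrow> a \<in> carrier A \<Longrightarrow> x \<in> carrier M \<Longrightarrow> y \<in> carrier M \<Longrightarrow>
    a \<odot>\<^bsub>M\<^esub> (x \<oplus>\<^bsub>M\<^esub> y) = (a \<odot>\<^bsub>M\<^esub> x) \<oplus>\<^bsub>M\<^esub> (a \<odot>\<^bsub>M\<^esub> y)"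
  by (simp add: left_module_def)

lemma lmod_smult_assoc:
  "left_module A M \<Longrightarrow> a \<in> carrier A \<Longrightarrow> b \<in> carrier A \<Longrightarrow> x \<in> carrier M \<Longrightarrow>
    (a \<otimes>\<^bsub>A\<^esub> b) \<odot>\<^bsub>M\<^esub> x = a \<odot>\<^bsub>M\<^esub> (b \<odot>\<^bsub>M\<^esub> x)"
  by (simp add: left_module_def)

lemma lmod_smult_one: "left_module A M \<Longrightarrow> x \<in> carrier M \<Longrightarrow> \<one>\<^bsub>A\<^esub> \<odot>\<^bsub>M\<^esub> x = x"
  by (simp add: left_module_def)

lemma lmod_smult_r_zero:
  assumes "left_module A M" "a \<in> carrier A"
  shows "a \<odot>\<^bsub>M\<^esub> \<zero>\<^bsub>M\<^esub> = \<zero>\<^bsub>M\<^esub>"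
proof -
  interpret abelian_group M using lmod_abelian_group[OF assms(1)] .
  have "a \<odot>\<^bsub>M\<^esub> \<zero>\<^bsub>M\<^esub> = (a \<odot>\<^bsub>M\<^esub> \<zero>\<^bsub>M\<^esub>) \<oplus>\<^bsub>M\<^esub> (a \<odot>\<^bsub>M\<^esub> \<zero>\<^bsub>M\<^esub>)"
    using lmod_smult_r_distr[OF assms, of "\<zero>\<^bsub>M\<^esub>" "\<zero>\<^bsub>M\<^esub>"] by simp
  then show ?thesis
    using assms by (metis add.l_cancel_one' lmod_smult_closed zero_closed)
qed

lemma lmod_smult_l_zero:
  assumes "left_module A M" "x \<in> carrier M"
  shows "\<zero>\<^bsub>A\<^esub> \<odot>\<^bsub>M\<^esub> x = \<zero>\<^bsub>M\<^esub>"
proof -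
  interpret abelian_group M using lmod_abelian_group[OF assms(1)] .
  interpret R: ring A using lmod_ring[OF assms(1)] .
  have "\<zero>\<^bsub>A\<^esub> \<odot>\<^bsub>M\<^esub> x = (\<zero>\<^bsub>A\<^esub> \<odot>\<^bsub>M\<^esub> x) \<oplus>\<^bsub>M\<^esub> (\<zero>\<^bsub>A\<^esub> \<odot>\<^bsub>M\<^esub> x)"
    using lmod_smult_l_distr[OF assms(1), of "\<zero>\<^bsub>A\<^esub>" "\<zero>\<^bsub>A\<^esub>" x] assms by simp
  then show ?thesis
    using assms by (metis add.l_cancel_one' lmod_smult_closed R.zero_closed)
qed

lemma lmod_smult_r_minus:
  assumes "left_module A M" "a \<in> carrier A" "x \<in> carrier M"
  shows "a \<odot>\<^bsub>M\<^esub> (\<ominus>\<^bsub>M\<^esub> x) = \<ominus>\<^bsub>M\<^esub> (a \<odot>\<^bsub>M\<^esub> x)"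
proof -
  interpret abelian_group M using lmod_abelian_group[OF assms(1)] .
  have "(a \<odot>\<^bsub>M\<^esub> (\<ominus>\<^bsub>M\<^esub> x)) \<oplus>\<^bsub>M\<^esub> (a \<odot>\<^bsub>M\<^esub> x) = \<zero>\<^bsub>M\<^esub>"
    using lmod_smult_r_distr[OF assms(1,2), of "\<ominus>\<^bsub>M\<^esub> x" x] assms
      lmod_smult_r_zero[OF assms(1,2)]
    by (simp add: l_neg)
  then show ?thesis
    using assms by (metis a_inv_closed lmod_smult_closed minus_equality)
qed

lemma lmod_smult_r_diff:
  assumes "left_module A M" "a \<in> carrier A" "x \<in> carrier M" "y \<in> carrier M"
  shows "a \<odot>\<^bsub>M\<^esub> (x \<ominus>\<^bsub>M\<^esub> y) = (a \<odot>\<^bsub>M\<^esub> x) \<ominus>\<^bsub>M\<^esub> (a \<odot>\<^bsub>M\<^esub> y)"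
proof -
  interpret abelian_group M using lmod_abelian_group[OF assms(1)] .
  show ?thesis
    using assms by (simp add: minus_eq lmod_smult_r_distr lmod_smult_r_minus)
qed

lemma (in abelian_group) minus_eq_zero_imp_eq:
  "x \<in> carrier G \<Longrightarrow> y \<in> carrier G \<Longrightarrow> x \<ominus> y = \<zero> \<Longrightarrow> x = y"
  by (metis a_minus_def add.inv_closed add.inv_equality add.inv_inv add.m_comm)

lemma mod_hom_closed: "mod_hom A M N f \<Longrightarrow> x \<in> carrier M \<Longrightarrow> f x \<in> carrier N"
  by (auto simp: mod_hom_def)

lemma mod_hom_add:
  "mod_hom A M N f \<Longrightarrow> x \<in> carrier M \<Longrightarrow> y \<in> carrier M \<Longrightarrow> f (x \<oplus>\<^bsub>M\<^esub> y) = f x \<oplus>\<^bsub>N\<^esub> f y"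
  by (auto simp: mod_hom_def)

lemma mod_hom_smult:
  "mod_hom A M N f \<Longrightarrow> a \<in> carrier A \<Longrightarrow> x \<in> carrier M \<Longrightarrow> f (a \<odot>\<^bsub>M\<^esub> x) = a \<odot>\<^bsub>N\<^esub> f x"
  by (auto simp: mod_hom_def)

lemma mod_hom_zero:
  assumes "mod_hom A M N f" "left_module A M" "left_module A N"
  shows "f \<zero>\<^bsub>M\<^esub> = \<zero>\<^bsub>N\<^esub>"
proof -
  interpret M: abelian_group M using lmod_abelian_group[OF assms(2)] .
  interpret N: abelian_group N using lmod_abelian_group[OF assms(3)] .
  have "f \<zero>\<^bsub>M\<^esub> = f \<zero>\<^bsub>M\<^esub> \<oplus>\<^bsub>N\<^esub> f \<zero>\<^bsub>M\<^esub>"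
    using mod_hom_add[OF assms(1), of "\<zero>\<^bsub>M\<^esub>" "\<zero>\<^bsub>M\<^esub>"] by simp
  moreover have "f \<zero>\<^bsub>M\<^esub> \<in> carrier N"
    using mod_hom_closed[OF assms(1) M.zero_closed] .
  ultimately show ?thesis
    using N.add.l_cancel_one' by simp
qed

lemma mod_hom_minus:
  assumes "mod_hom A M N f" "left_module A M" "left_module A N" "x \<in> carrier M"
  shows "f (\<ominus>\<^bsub>M\<^esub> x) = \<ominus>\<^bsub>N\<^esub> f x"
proof -
  interpret M: abelian_group M using lmod_abelian_group[OF assms(2)] .
  interpret N: abelian_group N using lmod_abelian_group[OF assms(3)] .
  have "f (\<ominus>\<^bsub>M\<^esub> x) \<oplus>\<^bsub>N\<^esub> f x = \<zero>\<^bsub>N\<^esub>"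
    using mod_hom_add[OF assms(1), of "\<ominus>\<^bsub>M\<^esub> x" x] assms mod_hom_zero[OF assms(1-3)]
    by (simp add: M.l_neg)
  then show ?thesis
    using assms(4) mod_hom_closed[OF assms(1)] by (simp add: N.minus_equality)
qed

lemma mod_hom_diff:
  assumes "mod_hom A M N f" "left_module A M" "left_module A N"
    "x \<in> carrier M" "y \<in> carrier M"
  shows "f (x \<ominus>\<^bsub>M\<^esub> y) = f x \<ominus>\<^bsub>N\<^esub> f y"
proof -
  interpret M: abelian_group M using lmod_abelian_group[OF assms(2)] .
  interpret N: abelian_group N using lmod_abelian_group[OF assms(3)] .
  show ?thesis
    using assms mod_hom_add[OF assms(1)] mod_hom_minus[OF assms(1-3)]
    by (simp add: M.minus_eq N.minus_eq)
qed

lemma mod_hom_comp: "mod_hom A M N f \<Longrightarrow> mod_hom A N P g \<Longrightarrow> mod_hom A M P (\<lambda>x. g (f x))"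
  unfolding mod_hom_def by (auto simp: Pi_def)

lemma mod_hom_id: "mod_hom A M M (\<lambda>x. x)"
  unfolding mod_hom_def by auto

lemma mod_hom_const_zero:
  assumes "left_module A N"
  shows "mod_hom A M N (\<lambda>x. \<zero>\<^bsub>N\<^esub>)"
proof -
  interpret N: abelian_group N using lmod_abelian_group[OF assms] .
  show ?thesis
    unfolding mod_hom_def using lmod_smult_r_zero[OF assms] by auto
qed

lemma mod_hom_add_fun:
  assumes "mod_hom A M N f" "mod_hom A M N g" "left_module A N"
  shows "mod_hom A M N (\<lambda>x. f x \<oplus>\<^bsub>N\<^esub> g x)"
proof -
  interpret N: abelian_group N using lmod_abelian_group[OF assms(3)] .
  show ?thesis
    unfolding mod_hom_def
  proof (intro conjI ballI)
    show "(\<lambda>x. f x \<oplus>\<^bsub>N\<^esub> g x) \<in> carrier M \<rightarrow> carrier N"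
      using assms by (auto simp: mod_hom_closed)
  next
    fix x y assume "x \<in> carrier M" "y \<in> carrier M"
    then show "f (x \<oplus>\<^bsub>M\<^esub> y) \<oplus>\<^bsub>N\<^esub> g (x \<oplus>\<^bsub>M\<^esub> y) = f x \<oplus>\<^bsub>N\<^esub> g x \<oplus>\<^bsub>N\<^esub> (f y \<oplus>\<^bsub>N\<^esub> g y)"
      using assms by (simp add: mod_hom_add mod_hom_closed N.a_ac)
  next
    fix a x assume "a \<in> carrier A" "x \<in> carrier M"
    then show "f (a \<odot>\<^bsub>M\<^esub> x) \<oplus>\<^bsub>N\<^esub> g (a \<odot>\<^bsub>M\<^esub> x) = a \<odot>\<^bsub>N\<^esub> (f x \<oplus>\<^bsub>N\<^esub> g x)"
      using assms by (simp add: mod_hom_smult mod_hom_closed lmod_smult_r_distr)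
  qed
qed

lemma mod_hom_eq_if_diff_zero:
  assumes "mod_hom A M N f" "left_module A M" "left_module A N"
    "x \<in> carrier M" "y \<in> carrier M" "f (x \<ominus>\<^bsub>M\<^esub> y) = \<zero>\<^bsub>N\<^esub>"
  shows "f x = f y"
proof -
  interpret N: abelian_group N using lmod_abelian_group[OF assms(3)] .
  show ?thesis
    using mod_hom_diff[OF assms(1-5)] assms(6) mod_hom_closed[OF assms(1)] assms(4,5)
    by (simp add: N.minus_eq_zero_imp_eq)
qed

lemma mod_hom_inj_onI:
  assumes "mod_hom A M N f" "left_module A M" "left_module A N"
    "\<And>x. x \<in> carrier M \<Longrightarrow> f x = \<zero>\<^bsub>N\<^esub> \<Longrightarrow> x = \<zero>\<^bsub>M\<^esub>"
  shows "inj_on f (carrier M)"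
proof (rule inj_onI)
  interpret M: abelian_group M using lmod_abelian_group[OF assms(2)] .
  interpret N: abelian_group N using lmod_abelian_group[OF assms(3)] .
  fix x y assume xy: "x \<in> carrier M" "y \<in> carrier M" "f x = f y"
  then have "f (x \<ominus>\<^bsub>M\<^esub> y) = \<zero>\<^bsub>N\<^esub>"
    using mod_hom_diff[OF assms(1-3)] mod_hom_closed[OF assms(1)] by (simp add: N.minus_eq N.r_neg)
  then show "x = y"
    using assms(4) xy by (simp add: M.minus_eq_zero_imp_eq)
qed

lemma mod_hom_inj_on_zero:
  assumes "mod_hom A M N f" "left_module A M" "left_module A N" "inj_on f (carrier M)"
    "x \<in> carrier M" "f x = \<zero>\<^bsub>N\<^esub>"
  shows "x = \<zero>\<^bsub>M\<^esub>"
proof -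
  interpret M: abelian_group M using lmod_abelian_group[OF assms(2)] .
  show ?thesis
    using assms mod_hom_zero[OF assms(1-3)] by (metis M.zero_closed inj_on_def)
qed

locale biprod_maps =
  fixes A :: "'a ring" and X Y Z :: "('a, 'b) module" and i1 i2 p1 p2 :: "'b \<Rightarrow> 'b"
  assumes lX: "left_module A X" and lY: "left_module A Y" and lZ: "left_module A Z"
    and hi1: "mod_hom A Y X i1" and hi2: "mod_hom A Z X i2"
    and hp1: "mod_hom A X Y p1" and hp2: "mod_hom A X Z p2"
    and p1_i1: "\<And>y. y \<in> carrier Y \<Longrightarrow> p1 (i1 y) = y"
    and p2_i2: "\<And>z. z \<in> carrier Z \<Longrightarrow> p2 (i2 z) = z"
    and p1_i2: "\<And>z. z \<in> carrier Z \<Longrightarrow> p1 (i2 z) = \<zero>\<^bsub>Y\<^esub>"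
    and p2_i1: "\<And>y. y \<in> carrier Y \<Longrightarrow> p2 (i1 y) = \<zero>\<^bsub>Z\<^esub>"
    and decomp: "\<And>x. x \<in> carrier X \<Longrightarrow> i1 (p1 x) \<oplus>\<^bsub>X\<^esub> i2 (p2 x) = x"
begin

sublocale X: abelian_group X using lmod_abelian_group[OF lX] .
sublocale Y: abelian_group Y using lmod_abelian_group[OF lY] .
sublocale Z: abelian_group Z using lmod_abelian_group[OF lZ] .

lemma closed:
  "y \<in> carrier Y \<Longrightarrow> i1 y \<in> carrier X" "z \<in> carrier Z \<Longrightarrow> i2 z \<in> carrier X"
  "x \<in> carrier X \<Longrightarrow> p1 x \<in> carrier Y" "x \<in> carrier X \<Longrightarrow> p2 x \<in> carrier Z"
  using hi1 hi2 hp1 hp2 mod_hom_closed by metis+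

lemma sum_closed: "y \<in> carrier Y \<Longrightarrow> z \<in> carrier Z \<Longrightarrow> i1 y \<oplus>\<^bsub>X\<^esub> i2 z \<in> carrier X"
  using closed by simp

lemma p1_sum: "y \<in> carrier Y \<Longrightarrow> z \<in> carrier Z \<Longrightarrow> p1 (i1 y \<oplus>\<^bsub>X\<^esub> i2 z) = y"
  using mod_hom_add[OF hp1 closed(1,2)] p1_i1 p1_i2 by simp

lemma p2_sum: "y \<in> carrier Y \<Longrightarrow> z \<in> carrier Z \<Longrightarrow> p2 (i1 y \<oplus>\<^bsub>X\<^esub> i2 z) = z"
  using mod_hom_add[OF hp2 closed(1,2)] p2_i1 p2_i2 by simp

lemma i1_zero: "i1 \<zero>\<^bsub>Y\<^esub> = \<zero>\<^bsub>X\<^esub>" using mod_hom_zero[OF hi1 lY lX] .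
lemma i2_zero: "i2 \<zero>\<^bsub>Z\<^esub> = \<zero>\<^bsub>X\<^esub>" using mod_hom_zero[OF hi2 lZ lX] .
lemma p1_zero: "p1 \<zero>\<^bsub>X\<^esub> = \<zero>\<^bsub>Y\<^esub>" using mod_hom_zero[OF hp1 lX lY] .
lemma p2_zero: "p2 \<zero>\<^bsub>X\<^esub> = \<zero>\<^bsub>Z\<^esub>" using mod_hom_zero[OF hp2 lX lZ] .

lemma eq_zeroI: "x \<in> carrier X \<Longrightarrow> p1 x = \<zero>\<^bsub>Y\<^esub> \<Longrightarrow> p2 x = \<zero>\<^bsub>Z\<^esub> \<Longrightarrow> x = \<zero>\<^bsub>X\<^esub>"
  using decomp i1_zero i2_zero by force

end

lemma biprod_mapsE:
  assumes "is_biprod A X Y Z" "left_module A X" "left_module A Y" "left_module A Z"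
  obtains i1 i2 p1 p2 where "biprod_maps A X Y Z i1 i2 p1 p2"
  using assms unfolding is_biprod_def biprod_maps_def by blast

lemma lmod_submodule:
  assumes "left_module A W" "K \<subseteq> carrier W" "\<zero>\<^bsub>W\<^esub> \<in> K"
    "\<And>x y. x \<in> K \<Longrightarrow> y \<in> K \<Longrightarrow> x \<oplus>\<^bsub>W\<^esub> y \<in> K"
    "\<And>x. x \<in> K \<Longrightarrow> \<ominus>\<^bsub>W\<^esub> x \<in> K"
    "\<And>a x. a \<in> carrier A \<Longrightarrow> x \<in> K \<Longrightarrow> a \<odot>\<^bsub>W\<^esub> x \<in> K"
  shows "left_module A (W\<lparr>carrier := K\<rparr>)"
proof -
  interpret abelian_group W using lmod_abelian_group[OF assms(1)] .
  have "abelian_group (W\<lparr>carrier := K\<rparr>)"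
  proof (rule abelian_groupI; simp)
    fix x assume "x \<in> K"
    then show "\<exists>y\<in>K. y \<oplus>\<^bsub>W\<^esub> x = \<zero>\<^bsub>W\<^esub>"
      using assms(2,5) by (metis l_neg subsetD)
  qed (use assms(2-4) in \<open>auto intro: a_assoc a_comm\<close>)
  then show ?thesis
    using assms(1,2,6) by (auto simp: left_module_def subset_iff)
qed

definition zero_module :: "'a amod" where
  "zero_module = \<lparr>carrier = {{}}, mult = (\<lambda>_ _. {}), one = {}, zero = {},
     add = (\<lambda>_ _. {}), smult = (\<lambda>_ _. {})\<rparr>"

lemma zero_module_Amod: "ring A \<Longrightarrow> zero_module \<in> Amod A"
proof -
  assume "ring A"
  have ag: "abelian_group zero_module"
    by (rule abelian_groupI) (auto simp: zero_module_def)
  then interpret abelian_group zero_module .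
  have finsum_empty: "finsum zero_module f {} = {}" for f
    by (simp only: finsum_empty) (simp add: zero_module_def)
  have "fin_gen A zero_module"
    unfolding fin_gen_def
    by (intro exI[of _ "{}"]) (simp add: finsum_empty, simp add: zero_module_def)
  moreover have "left_module A zero_module"
    unfolding left_module_def using \<open>ring A\<close> ag by (auto simp: zero_module_def)
  ultimately show ?thesis by (simp add: Amod_def)
qed

lemma zero_mod_zero_module: "zero_mod zero_module"
  by (simp add: zero_mod_def zero_module_def)

lemma ses_zero_right:
  assumes "left_module A M" "left_module A Z" "zero_mod Z"
  shows "ses A M M Z"
proof -
  interpret M: abelian_group M using lmod_abelian_group[OF assms(1)] .
  show ?thesis
    unfolding ses_def using assms(3) mod_hom_id mod_hom_const_zero[OF assms(2)]
    by (intro exI conjI) (auto simp: zero_mod_def)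
qed

lemma ses_zero_left:
  assumes "left_module A M" "left_module A Z" "zero_mod Z"
  shows "ses A Z M M"
proof -
  interpret M: abelian_group M using lmod_abelian_group[OF assms(1)] .
  show ?thesis
    unfolding ses_def using assms(3) mod_hom_id mod_hom_const_zero[OF assms(1)]
    by (intro exI conjI) (auto simp: zero_mod_def)
qed

lemma biprod_zero_right:
  assumes "left_module A V" "left_module A Z" "zero_mod Z"
  shows "is_biprod A V V Z"
proof -
  interpret V: abelian_group V using lmod_abelian_group[OF assms(1)] .
  show ?thesis
    unfolding is_biprod_def using assms(3) mod_hom_id
      mod_hom_const_zero[OF assms(1)] mod_hom_const_zero[OF assms(2)]
    by (intro exI conjI) (auto simp: zero_mod_def)
qed


section \<open>Finite generation, direct sums and direct summands\<close>

definition lin_comb :: "'a ring \<Rightarrow> ('a, 'b) module \<Rightarrow> 'b set \<Rightarrow> 'b \<Rightarrow> bool" where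
  "lin_comb A M S x \<longleftrightarrow> (\<exists>f\<in>S \<rightarrow> carrier A. x = finsum M (\<lambda>s. f s \<odot>\<^bsub>M\<^esub> s) S)"

lemma fin_gen_iff_lin_comb:
  "fin_gen A M \<longleftrightarrow> (\<exists>S. finite S \<and> S \<subseteq> carrier M \<and> (\<forall>x\<in>carrier M. lin_comb A M S x))"
  by (simp add: fin_gen_def lin_comb_def)

lemma lin_comb_closed:
  assumes "left_module A M" "S \<subseteq> carrier M" "lin_comb A M S x"
  shows "x \<in> carrier M"
proof -
  interpret abelian_group M using lmod_abelian_group[OF assms(1)] .
  show ?thesis
    using assms unfolding lin_comb_def by (auto intro!: finsum_closed)
qed

lemma lin_comb_zero:
  assumes "left_module A M" "S \<subseteq> carrier M"
  shows "lin_comb A M S \<zero>\<^bsub>M\<^esub>"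
proof -
  interpret abelian_group M using lmod_abelian_group[OF assms(1)] .
  interpret R: ring A using lmod_ring[OF assms(1)] .
  have "finsum M (\<lambda>s. \<zero>\<^bsub>A\<^esub> \<odot>\<^bsub>M\<^esub> s) S = finsum M (\<lambda>s. \<zero>\<^bsub>M\<^esub>) S"
    by (rule finsum_cong') (use assms lmod_smult_l_zero[OF assms(1)] in auto)
  then show ?thesis
    unfolding lin_comb_def by (intro bexI[of _ "\<lambda>_. \<zero>\<^bsub>A\<^esub>"]) auto
qed

lemma lin_comb_add:
  assumes "left_module A M" "S \<subseteq> carrier M" "lin_comb A M S x" "lin_comb A M S y"
  shows "lin_comb A M S (x \<oplus>\<^bsub>M\<^esub> y)"
proof -
  interpret abelian_group M using lmod_abelian_group[OF assms(1)] .
  interpret R: ring A using lmod_ring[OF assms(1)] .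
  obtain f g where f: "f \<in> S \<rightarrow> carrier A" "x = finsum M (\<lambda>s. f s \<odot>\<^bsub>M\<^esub> s) S"
    and g: "g \<in> S \<rightarrow> carrier A" "y = finsum M (\<lambda>s. g s \<odot>\<^bsub>M\<^esub> s) S"
    using assms(3,4) unfolding lin_comb_def by blast
  have fg: "\<And>s. s \<in> S \<Longrightarrow> f s \<in> carrier A" "\<And>s. s \<in> S \<Longrightarrow> g s \<in> carrier A"
    "\<And>s. s \<in> S \<Longrightarrow> s \<in> carrier M"
    using f g assms(2) by auto
  have "finsum M (\<lambda>s. (f s \<oplus>\<^bsub>A\<^esub> g s) \<odot>\<^bsub>M\<^esub> s) S
      = finsum M (\<lambda>s. f s \<odot>\<^bsub>M\<^esub> s \<oplus>\<^bsub>M\<^esub> g s \<odot>\<^bsub>M\<^esub> s) S"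
    by (rule finsum_cong') (use fg assms(1) in \<open>auto simp: lmod_smult_l_distr\<close>)
  also have "\<dots> = x \<oplus>\<^bsub>M\<^esub> y"
    using f g assms by (subst finsum_addf) auto
  finally show ?thesis
    unfolding lin_comb_def using f g by (intro bexI[of _ "\<lambda>s. f s \<oplus>\<^bsub>A\<^esub> g s"]) auto
qed

lemma lin_comb_smult_gen:
  assumes "left_module A M" "S \<subseteq> carrier M" "finite S" "t \<in> S" "a \<in> carrier A"
  shows "lin_comb A M S (a \<odot>\<^bsub>M\<^esub> t)"
proof -
  interpret abelian_group M using lmod_abelian_group[OF assms(1)] .
  interpret R: ring A using lmod_ring[OF assms(1)] .
  have "finsum M (\<lambda>s. (if t = s then a else \<zero>\<^bsub>A\<^esub>) \<odot>\<^bsub>M\<^esub> s) S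
      = finsum M (\<lambda>s. if t = s then a \<odot>\<^bsub>M\<^esub> s else \<zero>\<^bsub>M\<^esub>) S"
    by (rule finsum_cong') (use assms lmod_smult_l_zero[OF assms(1)] in auto)
  also have "\<dots> = a \<odot>\<^bsub>M\<^esub> t"
    by (rule add.finprod_singleton) (use assms in auto)
  finally show ?thesis
    unfolding lin_comb_def using assms
    by (intro bexI[of _ "\<lambda>s. if t = s then a else \<zero>\<^bsub>A\<^esub>"]) auto
qed

lemma lin_comb_finsum:
  assumes "left_module A M" "T \<subseteq> carrier M" "finite S" "\<And>s. s \<in> S \<Longrightarrow> lin_comb A M T (h s)"
  shows "lin_comb A M T (finsum M h S)"
  using assms(3,4)
proof (induction S rule: finite_induct)
  case empty
  interpret abelian_group M using lmod_abelian_group[OF assms(1)] .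
  show ?case using lin_comb_zero[OF assms(1,2)] by simp
next
  case (insert s S)
  interpret abelian_group M using lmod_abelian_group[OF assms(1)] .
  have "h \<in> insert s S \<rightarrow> carrier M"
    using insert.prems lin_comb_closed[OF assms(1,2)] by blast
  then show ?case
    using insert lin_comb_add[OF assms(1,2)] by simp
qed

lemma lin_comb_mono:
  assumes "left_module A M" "T \<subseteq> carrier M" "finite T" "S \<subseteq> T" "lin_comb A M S x"
  shows "lin_comb A M T x"
proof -
  obtain f where f: "f \<in> S \<rightarrow> carrier A" "x = finsum M (\<lambda>s. f s \<odot>\<^bsub>M\<^esub> s) S"
    using assms(5) unfolding lin_comb_def by blast
  show ?thesis
    unfolding f(2) using assms f(1) finite_subset
    by (intro lin_comb_finsum lin_comb_smult_gen) auto
qed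

lemma mod_hom_finsum:
  assumes "mod_hom A M N g" "left_module A M" "left_module A N" "finite S"
    "h \<in> S \<rightarrow> carrier M"
  shows "g (finsum M h S) = finsum N (\<lambda>s. g (h s)) S"
  using assms(4,5)
proof (induction S rule: finite_induct)
  case empty
  interpret abelian_group M using lmod_abelian_group[OF assms(2)] .
  interpret N: abelian_group N using lmod_abelian_group[OF assms(3)] .
  show ?case using mod_hom_zero[OF assms(1-3)] by simp
next
  case (insert s S)
  interpret abelian_group M using lmod_abelian_group[OF assms(2)] .
  interpret N: abelian_group N using lmod_abelian_group[OF assms(3)] .
  show ?case
    using insert mod_hom_add[OF assms(1)] mod_hom_closed[OF assms(1)] by (simp add: Pi_iff)
qed

lemma lin_comb_image:
  assumes "mod_hom A M N g" "left_module A M" "left_module A N" "finite S" "S \<subseteq> carrier M"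
    "lin_comb A M S x"
  shows "lin_comb A N (g ` S) (g x)"
proof -
  obtain f where f: "f \<in> S \<rightarrow> carrier A" "x = finsum M (\<lambda>s. f s \<odot>\<^bsub>M\<^esub> s) S"
    using assms(6) unfolding lin_comb_def by blast
  have "g x = finsum N (\<lambda>s. g (f s \<odot>\<^bsub>M\<^esub> s)) S"
    unfolding f(2) using f(1) assms(2,5) by (intro mod_hom_finsum[OF assms(1-4)]) auto
  also have "\<dots> = finsum N (\<lambda>s. f s \<odot>\<^bsub>N\<^esub> g s) S"
  proof (rule abelian_monoid.finsum_cong')
    show "abelian_monoid N"
      using lmod_abelian_group[OF assms(3)] by (rule abelian_group.axioms(1))
    show "(\<lambda>s. f s \<odot>\<^bsub>N\<^esub> g s) \<in> S \<rightarrow> carrier N"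
      using f(1) assms(3,5) mod_hom_closed[OF assms(1)] by auto
    show "\<And>s. s \<in> S \<Longrightarrow> g (f s \<odot>\<^bsub>M\<^esub> s) = f s \<odot>\<^bsub>N\<^esub> g s"
      using f(1) assms(5) mod_hom_smult[OF assms(1)] by auto
  qed simp
  finally show ?thesis
    using f(1) assms mod_hom_closed[OF assms(1)]
    by (auto intro!: lin_comb_finsum lin_comb_smult_gen)
qed

lemma fin_gen_image:
  assumes "mod_hom A M N g" "left_module A M" "left_module A N" "fin_gen A M"
    "g ` carrier M = carrier N"
  shows "fin_gen A N"
proof -
  obtain S where S: "finite S" "S \<subseteq> carrier M" "\<forall>x\<in>carrier M. lin_comb A M S x"
    using assms(4) unfolding fin_gen_iff_lin_comb by blast
  have "\<forall>y\<in>carrier N. lin_comb A N (g ` S) y"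
    using lin_comb_image[OF assms(1-3) S(1,2)] S(3) assms(5) by force
  then show ?thesis
    unfolding fin_gen_iff_lin_comb using S mod_hom_closed[OF assms(1)] by blast
qed

lemma fin_gen_biprod:
  assumes "is_biprod A X Y Z" "left_module A X" "left_module A Y" "left_module A Z"
    "fin_gen A Y" "fin_gen A Z"
  shows "fin_gen A X"
proof -
  obtain i1 i2 p1 p2 where "biprod_maps A X Y Z i1 i2 p1 p2"
    using biprod_mapsE[OF assms(1-4)] .
  then interpret biprod_maps A X Y Z i1 i2 p1 p2 .
  obtain S1 where S1: "finite S1" "S1 \<subseteq> carrier Y" "\<forall>y\<in>carrier Y. lin_comb A Y S1 y"
    using assms(5) unfolding fin_gen_iff_lin_comb by blast
  obtain S2 where S2: "finite S2" "S2 \<subseteq> carrier Z" "\<forall>z\<in>carrier Z. lin_comb A Z S2 z"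
    using assms(6) unfolding fin_gen_iff_lin_comb by blast
  define S where "S = i1 ` S1 \<union> i2 ` S2"
  have S: "finite S" "S \<subseteq> carrier X"
    using S1 S2 closed by (auto simp: S_def)
  have "lin_comb A X S x" if x: "x \<in> carrier X" for x
  proof -
    have "lin_comb A X (i1 ` S1) (i1 (p1 x))" "lin_comb A X (i2 ` S2) (i2 (p2 x))"
      using lin_comb_image[OF hi1 lY lX S1(1,2)] lin_comb_image[OF hi2 lZ lX S2(1,2)]
        S1(3) S2(3) closed x by auto
    then have "lin_comb A X S (i1 (p1 x))" "lin_comb A X S (i2 (p2 x))"
      using lin_comb_mono[OF lX S(2,1)] by (auto simp: S_def)
    then show ?thesis
      using lin_comb_add[OF lX S(2)] decomp x by metis
  qed
  then show ?thesis
    unfolding fin_gen_iff_lin_comb using S by blast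
qed

text \<open>The direct sum has to live in the same type 'a list set as its summands, so a pair (y, z)
  is coded as the union of the images of y and z under two injections of lists with disjoint
  ranges (lists of even and of odd length).\<close>

definition tag_left :: "'a list \<Rightarrow> 'a list" where "tag_left l = l @ l"
definition tag_right :: "'a list \<Rightarrow> 'a list" where "tag_right l = undefined # l @ l"
definition pair_code :: "'a list set \<Rightarrow> 'a list set \<Rightarrow> 'a list set" where
  "pair_code y z = tag_left ` y \<union> tag_right ` z"
definition left_part :: "'a list set \<Rightarrow> 'a list set" where "left_part S = {l. tag_left l \<in> S}"
definition right_part :: "'a list set \<Rightarrow> 'a list set" where "right_part S = {l. tag_right l \<in> S}"

lemma tag_left_eq_iff: "tag_left l = tag_left m \<longleftrightarrow> l = m"
proof
  assume eq: "tag_left l = tag_left m"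
  then have "length (l @ l) = length (m @ m)" by (simp add: tag_left_def)
  then have "length l = length m" by simp
  then show "l = m" using eq by (simp add: tag_left_def)
qed simp

lemma tag_right_eq_iff: "tag_right l = tag_right m \<longleftrightarrow> l = m"
  using tag_left_eq_iff by (auto simp: tag_left_def tag_right_def)

lemma tag_left_neq_tag_right: "tag_left l \<noteq> tag_right m"
proof
  assume "tag_left l = tag_right m"
  then have "length (tag_left l) = length (tag_right m)" by simp
  then show False by (simp add: tag_left_def tag_right_def) presburger
qed

lemma left_part_pair_code [simp]: "left_part (pair_code y z) = y"
  by (auto simp: left_part_def pair_code_def tag_left_eq_iff
      tag_left_neq_tag_right tag_left_neq_tag_right[symmetric])

lemma right_part_pair_code [simp]: "right_part (pair_code y z) = z"
  by (auto simp: right_part_def pair_code_def tag_right_eq_iff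
      tag_left_neq_tag_right tag_left_neq_tag_right[symmetric])

definition dsum :: "'a amod \<Rightarrow> 'a amod \<Rightarrow> 'a amod" where
  "dsum M N = \<lparr>carrier = (\<lambda>(y, z). pair_code y z) ` (carrier M \<times> carrier N),
     mult = (\<lambda>_ _. {}), one = {}, zero = pair_code \<zero>\<^bsub>M\<^esub> \<zero>\<^bsub>N\<^esub>,
     add = (\<lambda>u v. pair_code (left_part u \<oplus>\<^bsub>M\<^esub> left_part v) (right_part u \<oplus>\<^bsub>N\<^esub> right_part v)),
     smult = (\<lambda>a u. pair_code (a \<odot>\<^bsub>M\<^esub> left_part u) (a \<odot>\<^bsub>N\<^esub> right_part u))\<rparr>"

lemma dsum_carrier: "u \<in> carrier (dsum M N) \<longleftrightarrow> (\<exists>y\<in>carrier M. \<exists>z\<in>carrier N. u = pair_code y z)"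
  by (auto simp: dsum_def)

lemma pair_code_in_dsum [simp]:
  "pair_code y z \<in> carrier (dsum M N) \<longleftrightarrow> y \<in> carrier M \<and> z \<in> carrier N"
  by (auto simp: dsum_carrier) (metis left_part_pair_code right_part_pair_code)+

lemma dsum_ops [simp]:
  "\<zero>\<^bsub>dsum M N\<^esub> = pair_code \<zero>\<^bsub>M\<^esub> \<zero>\<^bsub>N\<^esub>"
  "pair_code y z \<oplus>\<^bsub>dsum M N\<^esub> pair_code y' z' = pair_code (y \<oplus>\<^bsub>M\<^esub> y') (z \<oplus>\<^bsub>N\<^esub> z')"
  "a \<odot>\<^bsub>dsum M N\<^esub> pair_code y z = pair_code (a \<odot>\<^bsub>M\<^esub> y) (a \<odot>\<^bsub>N\<^esub> z)"
  by (auto simp: dsum_def)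

lemma dsum_cases:
  assumes "u \<in> carrier (dsum M N)"
  obtains y z where "y \<in> carrier M" "z \<in> carrier N" "u = pair_code y z"
  using assms by (auto simp: dsum_carrier)

lemma lmod_dsum:
  assumes "left_module A M" "left_module A N"
  shows "left_module A (dsum M N)"
proof -
  interpret M: abelian_group M using lmod_abelian_group[OF assms(1)] .
  interpret N: abelian_group N using lmod_abelian_group[OF assms(2)] .
  interpret R: ring A using lmod_ring[OF assms(1)] .
  have "abelian_group (dsum M N)"
  proof (rule abelian_groupI)
    fix x assume "x \<in> carrier (dsum M N)"
    then obtain y z where "y \<in> carrier M" "z \<in> carrier N" "x = pair_code y z"
      by (rule dsum_cases)
    then show "\<exists>x'\<in>carrier (dsum M N). x' \<oplus>\<^bsub>dsum M N\<^esub> x = \<zero>\<^bsub>dsum M N\<^esub>"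
      by (intro bexI[of _ "pair_code (\<ominus>\<^bsub>M\<^esub> y) (\<ominus>\<^bsub>N\<^esub> z)"]) (simp_all add: M.l_neg N.l_neg)
  qed (auto elim!: dsum_cases simp: M.a_ac N.a_ac)
  then show ?thesis
    unfolding left_module_def using assms
    by (auto elim!: dsum_cases simp: lmod_smult_l_distr lmod_smult_r_distr lmod_smult_assoc
        lmod_smult_one lmod_ring)
qed

lemma dsum_is_biprod:
  assumes "left_module A M" "left_module A N"
  shows "is_biprod A (dsum M N) M N"
proof -
  interpret M: abelian_group M using lmod_abelian_group[OF assms(1)] .
  interpret N: abelian_group N using lmod_abelian_group[OF assms(2)] .
  have "mod_hom A M (dsum M N) (\<lambda>y. pair_code y \<zero>\<^bsub>N\<^esub>)"
    "mod_hom A N (dsum M N) (\<lambda>z. pair_code \<zero>\<^bsub>M\<^esub> z)"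
    unfolding mod_hom_def using lmod_smult_r_zero[OF assms(1)] lmod_smult_r_zero[OF assms(2)]
    by auto
  moreover have "mod_hom A (dsum M N) M left_part" "mod_hom A (dsum M N) N right_part"
    unfolding mod_hom_def by (auto simp: dsum_carrier)
  ultimately show ?thesis
    unfolding is_biprod_def by (intro exI conjI) (auto simp: dsum_carrier)
qed

lemma biprod_exists:
  assumes "M \<in> Amod A" "N \<in> Amod A"
  shows "\<exists>X\<in>Amod A. is_biprod A X M N"
proof -
  have l: "left_module A M" "left_module A N" "fin_gen A M" "fin_gen A N"
    using assms by (auto simp: Amod_def)
  have "fin_gen A (dsum M N)"
    by (rule fin_gen_biprod[OF dsum_is_biprod[OF l(1,2)] lmod_dsum[OF l(1,2)] l])
  then show ?thesis
    using dsum_is_biprod[OF l(1,2)] lmod_dsum[OF l(1,2)] by (auto simp: Amod_def)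
qed

lemma lmod_kernel:
  assumes "mod_hom A W X p" "left_module A W" "left_module A X"
  shows "left_module A (W\<lparr>carrier := {w \<in> carrier W. p w = \<zero>\<^bsub>X\<^esub>}\<rparr>)"
proof -
  interpret W: abelian_group W using lmod_abelian_group[OF assms(2)] .
  interpret X: abelian_group X using lmod_abelian_group[OF assms(3)] .
  show ?thesis
    by (rule lmod_submodule[OF assms(2)])
      (use mod_hom_zero[OF assms] mod_hom_add[OF assms(1)] mod_hom_minus[OF assms]
        mod_hom_smult[OF assms(1)] lmod_smult_r_zero[OF assms(3)] assms(2) in auto)
qed

lemma mod_hom_kernel_projection:
  assumes "mod_hom A X W i" "mod_hom A W X p" "left_module A X" "left_module A W"
    "\<And>x. x \<in> carrier X \<Longrightarrow> p (i x) = x"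
  shows "mod_hom A W (W\<lparr>carrier := {w \<in> carrier W. p w = \<zero>\<^bsub>X\<^esub>}\<rparr>) (\<lambda>w. w \<ominus>\<^bsub>W\<^esub> i (p w))"
  unfolding mod_hom_def
proof (intro conjI ballI)
  interpret X: abelian_group X using lmod_abelian_group[OF assms(3)] .
  interpret W: abelian_group W using lmod_abelian_group[OF assms(4)] .
  have ic: "\<And>x. x \<in> carrier X \<Longrightarrow> i x \<in> carrier W"
    and pc: "\<And>w. w \<in> carrier W \<Longrightarrow> p w \<in> carrier X"
    using assms(1,2) mod_hom_closed by metis+
  have "p (w \<ominus>\<^bsub>W\<^esub> i (p w)) = \<zero>\<^bsub>X\<^esub>" if "w \<in> carrier W" for w
    using mod_hom_diff[OF assms(2,4,3)] that ic pc assms(5) by (simp add: X.r_neg X.minus_eq)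
  then show "(\<lambda>w. w \<ominus>\<^bsub>W\<^esub> i (p w))
      \<in> carrier W \<rightarrow> carrier (W\<lparr>carrier := {w \<in> carrier W. p w = \<zero>\<^bsub>X\<^esub>}\<rparr>)"
    using ic pc by auto
  fix x y assume "x \<in> carrier W" "y \<in> carrier W"
  then show "x \<oplus>\<^bsub>W\<^esub> y \<ominus>\<^bsub>W\<^esub> i (p (x \<oplus>\<^bsub>W\<^esub> y))
      = (x \<ominus>\<^bsub>W\<^esub> i (p x)) \<oplus>\<^bsub>W\<lparr>carrier := {w \<in> carrier W. p w = \<zero>\<^bsub>X\<^esub>}\<rparr>\<^esub> (y \<ominus>\<^bsub>W\<^esub> i (p y))"
    using ic pc mod_hom_add[OF assms(2)] mod_hom_add[OF assms(1)]
    by (simp add: W.minus_eq W.minus_add W.a_ac)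
next
  fix a x assume "a \<in> carrier A" "x \<in> carrier W"
  then show "a \<odot>\<^bsub>W\<^esub> x \<ominus>\<^bsub>W\<^esub> i (p (a \<odot>\<^bsub>W\<^esub> x))
      = a \<odot>\<^bsub>W\<lparr>carrier := {w \<in> carrier W. p w = \<zero>\<^bsub>X\<^esub>}\<rparr>\<^esub> (x \<ominus>\<^bsub>W\<^esub> i (p x))"
    using mod_hom_closed[OF assms(1)] mod_hom_closed[OF assms(2)]
      mod_hom_smult[OF assms(2)] mod_hom_smult[OF assms(1)] assms(4)
    by (simp add: lmod_smult_r_diff)
qed

lemma retract_is_summand:
  assumes "X \<in> Amod A" "W \<in> Amod A" "mod_hom A X W i" "mod_hom A W X p"
    "\<And>x. x \<in> carrier X \<Longrightarrow> p (i x) = x"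
  shows "\<exists>Z\<in>Amod A. is_biprod A W X Z"
proof -
  have lX: "left_module A X" and lW: "left_module A W" and fW: "fin_gen A W"
    using assms by (auto simp: Amod_def)
  interpret W: abelian_group W using lmod_abelian_group[OF lW] .
  define Z where "Z = W\<lparr>carrier := {w \<in> carrier W. p w = \<zero>\<^bsub>X\<^esub>}\<rparr>"
  define q where "q = (\<lambda>w. w \<ominus>\<^bsub>W\<^esub> i (p w))"
  have lZ: "left_module A Z"
    unfolding Z_def by (rule lmod_kernel[OF assms(4) lW lX])
  have hq: "mod_hom A W Z q"
    unfolding Z_def q_def by (rule mod_hom_kernel_projection[OF assms(3,4) lX lW assms(5)])
  have ic: "\<And>x. x \<in> carrier X \<Longrightarrow> i x \<in> carrier W"
    and pc: "\<And>w. w \<in> carrier W \<Longrightarrow> p w \<in> carrier X"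
    using assms(3,4) mod_hom_closed by metis+
  have q_id: "q z = z" if "z \<in> carrier Z" for z
    using that mod_hom_zero[OF assms(3) lX lW] by (simp add: Z_def q_def W.minus_eq)
  have "q ` carrier W = carrier Z"
    using q_id mod_hom_closed[OF hq] by (force simp: Z_def)
  then have "fin_gen A Z"
    by (rule fin_gen_image[OF hq lW lZ fW])
  moreover have "is_biprod A W X Z"
    unfolding is_biprod_def
  proof (rule exI[of _ i], rule exI[of _ "\<lambda>z. z"], rule exI[of _ p], rule exI[of _ q],
      intro conjI)
    show "mod_hom A Z W (\<lambda>z. z)"
      unfolding mod_hom_def by (auto simp: Z_def)
    show "\<forall>x\<in>carrier X. q (i x) = \<zero>\<^bsub>Z\<^esub>"
      using assms(5) ic by (auto simp: Z_def q_def W.r_neg W.minus_eq)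
    show "\<forall>w\<in>carrier W. i (p w) \<oplus>\<^bsub>W\<^esub> q w = w"
      using ic pc by (auto simp: q_def W.minus_eq W.a_ac W.r_neg)
  qed (use assms(3-5) hq q_id in \<open>auto simp: Z_def\<close>)
  ultimately show ?thesis
    using lZ by (auto simp: Amod_def)
qed


section \<open>The additive closure\<close>

type_synonym ('a, 'b) factorisation = "('a, 'b) module \<times> ('b \<Rightarrow> 'b) \<times> ('b \<Rightarrow> 'b)"

fun factor_sum :: "('a, 'b) module \<Rightarrow> ('a, 'b) factorisation list \<Rightarrow> 'b \<Rightarrow> 'b" where
  "factor_sum M [] x = \<zero>\<^bsub>M\<^esub>"
| "factor_sum M ((Z, u, v) # ds) x = v (u x) \<oplus>\<^bsub>M\<^esub> factor_sum M ds x"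

definition factors_through ::
    "'a ring \<Rightarrow> ('a, 'b) module set \<Rightarrow> ('a, 'b) module \<Rightarrow> ('a, 'b) factorisation list \<Rightarrow> bool" where
  "factors_through A S X ds \<longleftrightarrow>
     (\<forall>(Z, u, v)\<in>set ds. Z \<in> S \<and> left_module A Z \<and> mod_hom A X Z u \<and> mod_hom A Z X v)"

text \<open>An entry (Z, u, v) of ds stands for the endomorphism v \<circ> u of X factoring through Z.
  X is a direct summand of a finite direct sum of objects of S iff its identity is the sum of
  such a list (addc_eq_sum_retract); unlike the definition of addc, this description is stable
  under transport along retractions and under refinement.\<close>

definition sum_retract :: "'a ring \<Rightarrow> 'a amod set \<Rightarrow> 'a amod \<Rightarrow> bool" where
  "sum_retract A S X \<longleftrightarrow> X \<in> Amod A \<and>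
     (\<exists>ds. factors_through A S X ds \<and> (\<forall>x\<in>carrier X. factor_sum X ds x = x))"

definition transport :: "('b \<Rightarrow> 'b) \<Rightarrow> ('b \<Rightarrow> 'b) \<Rightarrow> ('a, 'b) factorisation list \<Rightarrow>
    ('a, 'b) factorisation list" where
  "transport a b ds = map (\<lambda>(Z, u, v). (Z, \<lambda>x. u (a x), \<lambda>z. b (v z))) ds"

lemma factors_through_Cons [simp]:
  "factors_through A S X ((Z, u, v) # ds) \<longleftrightarrow>
     (Z \<in> S \<and> left_module A Z \<and> mod_hom A X Z u \<and> mod_hom A Z X v) \<and> factors_through A S X ds"
  by (simp add: factors_through_def)

lemma factors_through_Nil [simp]: "factors_through A S X []"
  by (simp add: factors_through_def)

lemma factors_through_append [simp]:
  "factors_through A S X (ds1 @ ds2) \<longleftrightarrow> factors_through A S X ds1 \<and> factors_through A S X ds2"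
  unfolding factors_through_def by (simp only: set_append ball_Un)

lemma factors_through_mono: "factors_through A S X ds \<Longrightarrow> S \<subseteq> S' \<Longrightarrow> factors_through A S' X ds"
  unfolding factors_through_def by fast

lemma factor_sum_closed:
  assumes "left_module A X" "factors_through A S X ds" "x \<in> carrier X"
  shows "factor_sum X ds x \<in> carrier X"
  using assms(2)
proof (induction ds)
  case Nil
  interpret abelian_group X using lmod_abelian_group[OF assms(1)] .
  show ?case by simp
next
  case (Cons d ds)
  interpret abelian_group X using lmod_abelian_group[OF assms(1)] .
  obtain Z u v where d: "d = (Z, u, v)" by (cases d)
  then show ?case
    using Cons assms(3) by (auto intro: mod_hom_closed)
qed

lemma factor_sum_append:
  assumes "left_module A X" "factors_through A S X ds1" "factors_through A S X ds2" "x \<in> carrier X"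
  shows "factor_sum X (ds1 @ ds2) x = factor_sum X ds1 x \<oplus>\<^bsub>X\<^esub> factor_sum X ds2 x"
  using assms(2)
proof (induction ds1)
  case Nil
  interpret abelian_group X using lmod_abelian_group[OF assms(1)] .
  show ?case using factor_sum_closed[OF assms(1,3,4)] by simp
next
  case (Cons d ds)
  interpret abelian_group X using lmod_abelian_group[OF assms(1)] .
  obtain Z u v where d: "d = (Z, u, v)" by (cases d)
  then show ?case
    using Cons assms factor_sum_closed[OF assms(1)] by (auto simp: a_assoc mod_hom_closed)
qed

lemma factors_through_transport:
  "factors_through A S Y ds \<Longrightarrow> mod_hom A X Y a \<Longrightarrow> mod_hom A Y X b \<Longrightarrow>
    factors_through A S X (transport a b ds)"
  unfolding factors_through_def transport_def by (auto intro: mod_hom_comp)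

lemma factor_sum_transport:
  assumes "left_module A X" "left_module A Y" "factors_through A S Y ds" "mod_hom A Y X b"
    "a x \<in> carrier Y"
  shows "factor_sum X (transport a b ds) x = b (factor_sum Y ds (a x))"
  using assms(3)
proof (induction ds)
  case Nil
  then show ?case using mod_hom_zero[OF assms(4,2,1)] by (simp add: transport_def)
next
  case (Cons d ds)
  obtain Z u v where d: "d = (Z, u, v)" by (cases d)
  have "v (u (a x)) \<in> carrier Y" "factor_sum Y ds (a x) \<in> carrier Y"
    using Cons d assms by (auto intro: mod_hom_closed factor_sum_closed)
  then show ?case
    using Cons d mod_hom_add[OF assms(4)] by (simp add: transport_def)
qed

lemma sum_retract_retract:
  assumes "sum_retract A S Y" "X \<in> Amod A" "mod_hom A X Y i" "mod_hom A Y X p"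
    "\<And>x. x \<in> carrier X \<Longrightarrow> p (i x) = x"
  shows "sum_retract A S X"
proof -
  obtain ds where ds: "factors_through A S Y ds" "\<forall>y\<in>carrier Y. factor_sum Y ds y = y"
    using assms(1) by (auto simp: sum_retract_def)
  have l: "left_module A X" "left_module A Y"
    using assms(1,2) by (auto simp: Amod_def sum_retract_def)
  have "factor_sum X (transport i p ds) x = x" if "x \<in> carrier X" for x
    using factor_sum_transport[OF l ds(1) assms(4)] ds(2) assms(5) mod_hom_closed[OF assms(3)] that
    by simp
  then show ?thesis
    unfolding sum_retract_def using assms(2) factors_through_transport[OF ds(1) assms(3,4)] by blast
qed

lemma sum_retract_biprod:
  assumes "sum_retract A S Y" "sum_retract A S Z" "X \<in> Amod A" "is_biprod A X Y Z"
  shows "sum_retract A S X"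
proof -
  obtain ds1 where ds1: "factors_through A S Y ds1" "\<forall>y\<in>carrier Y. factor_sum Y ds1 y = y"
    using assms(1) by (auto simp: sum_retract_def)
  obtain ds2 where ds2: "factors_through A S Z ds2" "\<forall>z\<in>carrier Z. factor_sum Z ds2 z = z"
    using assms(2) by (auto simp: sum_retract_def)
  have l: "left_module A X" "left_module A Y" "left_module A Z"
    using assms by (auto simp: Amod_def sum_retract_def)
  obtain i1 i2 p1 p2 where "biprod_maps A X Y Z i1 i2 p1 p2"
    using biprod_mapsE[OF assms(4) l] .
  then interpret biprod_maps A X Y Z i1 i2 p1 p2 .
  define ds where "ds = transport p1 i1 ds1 @ transport p2 i2 ds2"
  have g: "factors_through A S X (transport p1 i1 ds1)" "factors_through A S X (transport p2 i2 ds2)"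
    using factors_through_transport[OF ds1(1) hp1 hi1] factors_through_transport[OF ds2(1) hp2 hi2] .
  have "factor_sum X ds x = x" if x: "x \<in> carrier X" for x
  proof -
    have "factor_sum X ds x
        = factor_sum X (transport p1 i1 ds1) x \<oplus>\<^bsub>X\<^esub> factor_sum X (transport p2 i2 ds2) x"
      unfolding ds_def by (rule factor_sum_append[OF l(1) g x])
    also have "\<dots> = i1 (p1 x) \<oplus>\<^bsub>X\<^esub> i2 (p2 x)"
      using factor_sum_transport[OF l(1,2) ds1(1) hi1] factor_sum_transport[OF l(1,3) ds2(1) hi2]
        ds1(2) ds2(2) closed x by simp
    finally show ?thesis using decomp x by simp
  qed
  then show ?thesis
    unfolding sum_retract_def using assms(3) g by (intro conjI exI[of _ ds]) (auto simp: ds_def)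
qed

lemma sum_retract_zero: "X \<in> Amod A \<Longrightarrow> zero_mod X \<Longrightarrow> sum_retract A S X"
  unfolding sum_retract_def zero_mod_def by (intro conjI exI[of _ "[]"]) auto

lemma sum_retract_base:
  assumes "X \<in> S" "S \<subseteq> Amod A"
  shows "sum_retract A S X"
proof -
  have lX: "left_module A X" using assms by (auto simp: Amod_def)
  interpret abelian_group X using lmod_abelian_group[OF lX] .
  have "factors_through A S X [(X, \<lambda>x. x, \<lambda>x. x)]"
    using assms lX by (simp add: mod_hom_id)
  then show ?thesis
    unfolding sum_retract_def using assms by (intro conjI exI[of _ "[(X, \<lambda>x. x, \<lambda>x. x)]"]) auto
qed

lemma sum_retract_mono: "sum_retract A S X \<Longrightarrow> S \<subseteq> S' \<Longrightarrow> sum_retract A S' X"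
  unfolding sum_retract_def using factors_through_mono by metis

text \<open>Each entry (Z, u, v) is refined by transporting along u and v the factorisation of the
  identity of Z through objects of S.\<close>

lemma sum_retract_trans:
  assumes "sum_retract A {Y. sum_retract A S Y} X"
  shows "sum_retract A S X"
proof -
  obtain ds where ds: "factors_through A {Y. sum_retract A S Y} X ds"
      "\<forall>x\<in>carrier X. factor_sum X ds x = x"
    and XA: "X \<in> Amod A"
    using assms by (auto simp: sum_retract_def)
  have lX: "left_module A X" using XA by (auto simp: Amod_def)
  define sel where "sel Z = (SOME e. factors_through A S Z e \<and> (\<forall>z\<in>carrier Z. factor_sum Z e z = z))"
    for Z
  have sel: "factors_through A S Z (sel Z) \<and> (\<forall>z\<in>carrier Z. factor_sum Z (sel Z) z = z)"
    if "sum_retract A S Z" for Z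
    unfolding sel_def by (rule someI_ex) (use that in \<open>auto simp: sum_retract_def\<close>)
  define refine :: "('a, 'a list set) factorisation list \<Rightarrow> ('a, 'a list set) factorisation list"
    where "refine es = concat (map (\<lambda>(Z, u, v). transport u v (sel Z)) es)" for es
  have "factors_through A S X (refine es) \<and> (\<forall>x\<in>carrier X. factor_sum X (refine es) x = factor_sum X es x)"
    if "factors_through A {Y. sum_retract A S Y} X es" for es
    using that
  proof (induction es)
    case Nil
    then show ?case by (simp add: refine_def)
  next
    case (Cons d es)
    obtain Z u v where d: "d = (Z, u, v)" by (cases d)
    have Z: "sum_retract A S Z" "left_module A Z" "mod_hom A X Z u" "mod_hom A Z X v"
      using Cons d by auto
    have refine_Cons: "refine (d # es) = transport u v (sel Z) @ refine es"
      using d by (simp add: refine_def)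
    have g: "factors_through A S X (transport u v (sel Z))"
      using factors_through_transport[OF conjunct1[OF sel[OF Z(1)]] Z(3,4)] .
    have IH: "factors_through A S X (refine es)" "\<forall>x\<in>carrier X. factor_sum X (refine es) x = factor_sum X es x"
      using Cons d by auto
    have "factor_sum X (refine (d # es)) x = factor_sum X (d # es) x" if x: "x \<in> carrier X" for x
    proof -
      have "factor_sum X (transport u v (sel Z)) x = v (u x)"
        using factor_sum_transport[OF lX Z(2) conjunct1[OF sel[OF Z(1)]] Z(4)]
          sel[OF Z(1)] mod_hom_closed[OF Z(3) x] by simp
      then show ?thesis
        using refine_Cons factor_sum_append[OF lX g IH(1) x] IH(2) x d by simp
    qed
    then show ?case using refine_Cons g IH(1) by simp
  qed
  then have "factors_through A S X (refine ds)" "\<forall>x\<in>carrier X. factor_sum X (refine ds) x = x"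
    using ds by auto
  then show ?thesis
    unfolding sum_retract_def using XA by blast
qed

lemma dsums_Amod: "X \<in> dsums A S \<Longrightarrow> X \<in> Amod A"
  by (induction rule: dsums.induct) auto

lemma dsums_sum_retract:
  assumes "X \<in> dsums A S" "S \<subseteq> Amod A"
  shows "sum_retract A S X"
  using assms(1)
proof (induction rule: dsums.induct)
  case (dsums_zero M)
  then show ?case by (rule sum_retract_zero)
next
  case (dsums_step Y Z X)
  then show ?case
    using sum_retract_base[OF _ assms(2)] sum_retract_biprod by blast
qed

lemma addc_imp_sum_retract:
  assumes "X \<in> addc A S" "S \<subseteq> Amod A"
  shows "sum_retract A S X"
proof -
  obtain Y Z where Y: "Y \<in> dsums A S" "Z \<in> Amod A" "is_biprod A Y X Z" and X: "X \<in> Amod A"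
    using assms(1) by (auto simp: addc_def)
  have "left_module A Y" "left_module A X" "left_module A Z"
    using X Y dsums_Amod by (auto simp: Amod_def)
  then obtain i1 i2 p1 p2 where "biprod_maps A Y X Z i1 i2 p1 p2"
    using biprod_mapsE[OF Y(3)] by blast
  then interpret biprod_maps A Y X Z i1 i2 p1 p2 .
  show ?thesis
    using sum_retract_retract[OF dsums_sum_retract[OF Y(1) assms(2)] X hi1 hp1 p1_i1] .
qed

lemma (in biprod_maps) sum_of_factorisations:
  assumes "mod_hom A V Y f1" "mod_hom A Y V g1" "mod_hom A V Z f2" "mod_hom A Z V g2"
    "left_module A V"
  shows "mod_hom A V X (\<lambda>v. i1 (f1 v) \<oplus>\<^bsub>X\<^esub> i2 (f2 v))"
    and "mod_hom A X V (\<lambda>x. g1 (p1 x) \<oplus>\<^bsub>V\<^esub> g2 (p2 x))"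
    and "\<And>v. v \<in> carrier V \<Longrightarrow>
      g1 (p1 (i1 (f1 v) \<oplus>\<^bsub>X\<^esub> i2 (f2 v))) \<oplus>\<^bsub>V\<^esub> g2 (p2 (i1 (f1 v) \<oplus>\<^bsub>X\<^esub> i2 (f2 v)))
        = g1 (f1 v) \<oplus>\<^bsub>V\<^esub> g2 (f2 v)"
proof -
  show "mod_hom A V X (\<lambda>v. i1 (f1 v) \<oplus>\<^bsub>X\<^esub> i2 (f2 v))"
    using mod_hom_add_fun[OF mod_hom_comp[OF assms(1) hi1] mod_hom_comp[OF assms(3) hi2] lX] .
  show "mod_hom A X V (\<lambda>x. g1 (p1 x) \<oplus>\<^bsub>V\<^esub> g2 (p2 x))"
    using mod_hom_add_fun[OF mod_hom_comp[OF hp1 assms(2)] mod_hom_comp[OF hp2 assms(4)] assms(5)] .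
  fix v assume "v \<in> carrier V"
  then show "g1 (p1 (i1 (f1 v) \<oplus>\<^bsub>X\<^esub> i2 (f2 v))) \<oplus>\<^bsub>V\<^esub> g2 (p2 (i1 (f1 v) \<oplus>\<^bsub>X\<^esub> i2 (f2 v)))
      = g1 (f1 v) \<oplus>\<^bsub>V\<^esub> g2 (f2 v)"
    using p1_sum p2_sum mod_hom_closed[OF assms(1)] mod_hom_closed[OF assms(3)] by simp
qed

lemma factors_through_dsums:
  assumes "factors_through A S X ds" "X \<in> Amod A" "S \<subseteq> Amod A"
  shows "\<exists>W\<in>dsums A S. \<exists>i p. mod_hom A X W i \<and> mod_hom A W X p \<and>
           (\<forall>x\<in>carrier X. p (i x) = factor_sum X ds x)"
  using assms(1)
proof (induction ds)
  case Nil
  have "ring A" "left_module A X" using assms(2) lmod_ring by (auto simp: Amod_def)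
  then have "zero_module \<in> dsums A S" "left_module A zero_module"
    using dsums_zero[OF zero_module_Amod zero_mod_zero_module] zero_module_Amod
    by (auto simp: Amod_def)
  moreover have "mod_hom A X zero_module (\<lambda>_. \<zero>\<^bsub>zero_module\<^esub>)"
    "mod_hom A zero_module X (\<lambda>_. \<zero>\<^bsub>X\<^esub>)"
    using mod_hom_const_zero calculation(2) \<open>left_module A X\<close> by blast+
  ultimately show ?case
    by (intro bexI[of _ zero_module] exI conjI) auto
next
  case (Cons d ds)
  obtain Z u v where d: "d = (Z, u, v)" by (cases d)
  have Z: "Z \<in> S" "left_module A Z" "mod_hom A X Z u" "mod_hom A Z X v"
    and g: "factors_through A S X ds"
    using Cons(2) d by auto
  obtain W' i' p' where W': "W' \<in> dsums A S" "mod_hom A X W' i'" "mod_hom A W' X p'"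
    "\<forall>x\<in>carrier X. p' (i' x) = factor_sum X ds x"
    using Cons(1)[OF g] by blast
  obtain W where W: "W \<in> Amod A" "is_biprod A W W' Z"
    using biprod_exists[OF dsums_Amod[OF W'(1)]] Z(1) assms(3) by blast
  have l: "left_module A W" "left_module A W'" "left_module A X"
    using W dsums_Amod[OF W'(1)] assms(2) by (auto simp: Amod_def)
  obtain j1 j2 q1 q2 where "biprod_maps A W W' Z j1 j2 q1 q2"
    using biprod_mapsE[OF W(2) l(1,2) Z(2)] .
  then interpret biprod_maps A W W' Z j1 j2 q1 q2 .
  interpret X: abelian_group X using lmod_abelian_group[OF l(3)] .
  define i where "i x = j1 (i' x) \<oplus>\<^bsub>W\<^esub> j2 (u x)" for x
  define p where "p w = p' (q1 w) \<oplus>\<^bsub>X\<^esub> v (q2 w)" for w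
  have "mod_hom A X W i" "mod_hom A W X p"
    unfolding i_def p_def using sum_of_factorisations(1,2)[OF W'(2,3) Z(3,4) l(3)] .
  moreover have "p (i x) = factor_sum X (d # ds) x" if "x \<in> carrier X" for x
  proof -
    have "p (i x) = p' (i' x) \<oplus>\<^bsub>X\<^esub> v (u x)"
      unfolding i_def p_def using sum_of_factorisations(3)[OF W'(2,3) Z(3,4) l(3) that] .
    then show ?thesis
      using d that W'(4) factor_sum_closed[OF l(3) g] mod_hom_closed[OF Z(3)] mod_hom_closed[OF Z(4)]
      by (simp add: X.a_comm)
  qed
  ultimately show ?case
    using dsums_step[OF W'(1) Z(1) W] by blast
qed

lemma sum_retract_imp_addc:
  assumes "sum_retract A S X" "S \<subseteq> Amod A"
  shows "X \<in> addc A S"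
proof -
  obtain ds where ds: "factors_through A S X ds" "\<forall>x\<in>carrier X. factor_sum X ds x = x"
    and X: "X \<in> Amod A"
    using assms(1) by (auto simp: sum_retract_def)
  obtain W i p where W: "W \<in> dsums A S" "mod_hom A X W i" "mod_hom A W X p"
    "\<forall>x\<in>carrier X. p (i x) = factor_sum X ds x"
    using factors_through_dsums[OF ds(1) X assms(2)] by blast
  obtain Z where "Z \<in> Amod A" "is_biprod A W X Z"
    using retract_is_summand[OF X dsums_Amod[OF W(1)] W(2,3)] W(4) ds(2) by auto
  then show ?thesis
    using X W(1) by (auto simp: addc_def)
qed

lemma addc_eq_sum_retract: "S \<subseteq> Amod A \<Longrightarrow> addc A S = {X. sum_retract A S X}"
  using addc_imp_sum_retract sum_retract_imp_addc by blast

lemma addc_subset_Amod: "addc A S \<subseteq> Amod A"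
  by (auto simp: addc_def)

lemma addc_mono: "S \<subseteq> S' \<Longrightarrow> S' \<subseteq> Amod A \<Longrightarrow> addc A S \<subseteq> addc A S'"
  using addc_eq_sum_retract[of S A] addc_eq_sum_retract[of S' A] sum_retract_mono by blast

lemma subset_addc: "S \<subseteq> Amod A \<Longrightarrow> S \<subseteq> addc A S"
  using addc_eq_sum_retract[of S A] sum_retract_base by blast

lemma addc_addc_subset:
  assumes "S \<subseteq> Amod A"
  shows "addc A (addc A S) \<subseteq> addc A S"
proof
  fix X assume "X \<in> addc A (addc A S)"
  then have "sum_retract A (addc A S) X"
    using addc_imp_sum_retract addc_subset_Amod by blast
  then have "sum_retract A {Y. sum_retract A S Y} X"
    using addc_eq_sum_retract[OF assms] by simp
  then show "X \<in> addc A S"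
    using sum_retract_trans sum_retract_imp_addc assms by blast
qed

lemma zero_mod_in_addc: "X \<in> Amod A \<Longrightarrow> zero_mod X \<Longrightarrow> S \<subseteq> Amod A \<Longrightarrow> X \<in> addc A S"
  using sum_retract_zero sum_retract_imp_addc by blast

lemma addc_biprod_closed:
  "Y \<in> addc A S \<Longrightarrow> Z \<in> addc A S \<Longrightarrow> X \<in> Amod A \<Longrightarrow> is_biprod A X Y Z \<Longrightarrow> S \<subseteq> Amod A \<Longrightarrow>
    X \<in> addc A S"
  using sum_retract_biprod[of A S Y Z X] addc_eq_sum_retract[of S A] by blast

lemma addc_retract_closed:
  "Y \<in> addc A S \<Longrightarrow> X \<in> Amod A \<Longrightarrow> mod_hom A X Y i \<Longrightarrow> mod_hom A Y X p \<Longrightarrow>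
    (\<And>x. x \<in> carrier X \<Longrightarrow> p (i x) = x) \<Longrightarrow> S \<subseteq> Amod A \<Longrightarrow> X \<in> addc A S"
  using sum_retract_retract[of A S Y X i p] addc_eq_sum_retract[of S A] by blast


section \<open>Short exact sequences\<close>

lemma sesE:
  assumes "ses A X Y Z"
  obtains f g where "mod_hom A X Y f" "mod_hom A Y Z g" "inj_on f (carrier X)"
    "g ` carrier Y = carrier Z" "f ` carrier X = {y \<in> carrier Y. g y = \<zero>\<^bsub>Z\<^esub>}"
  using assms unfolding ses_def by (elim exE conjE) (rule that)

locale biprod_hom =
  U: biprod_maps A U U1 U2 a1 a2 b1 b2 + M: biprod_maps A M M1 M2 c1 c2 d1 d2
  for A :: "'a ring" and U U1 U2 :: "('a, 'b) module" and a1 a2 b1 b2 :: "'b \<Rightarrow> 'b"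
    and M M1 M2 :: "('a, 'b) module" and c1 c2 d1 d2 :: "'b \<Rightarrow> 'b" +
  fixes h1 h2 :: "'b \<Rightarrow> 'b"
  assumes hom1: "mod_hom A U1 M1 h1" and hom2: "mod_hom A U2 M2 h2"
begin

definition dsum_map :: "'b \<Rightarrow> 'b" where "dsum_map u = c1 (h1 (b1 u)) \<oplus>\<^bsub>M\<^esub> c2 (h2 (b2 u))"

lemma dsum_map_components_closed: "u \<in> carrier U \<Longrightarrow> h1 (b1 u) \<in> carrier M1 \<and> h2 (b2 u) \<in> carrier M2"
  by (simp add: U.closed mod_hom_closed[OF hom1] mod_hom_closed[OF hom2])

lemma mod_hom_dsum_map: "mod_hom A U M dsum_map"
  unfolding dsum_map_def[abs_def]
  by (rule mod_hom_add_fun[OF mod_hom_comp[OF mod_hom_comp[OF U.hp1 hom1] M.hi1]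
        mod_hom_comp[OF mod_hom_comp[OF U.hp2 hom2] M.hi2] M.lX])

lemma d1_dsum_map: "u \<in> carrier U \<Longrightarrow> d1 (dsum_map u) = h1 (b1 u)"
  and d2_dsum_map: "u \<in> carrier U \<Longrightarrow> d2 (dsum_map u) = h2 (b2 u)"
  unfolding dsum_map_def using M.p1_sum M.p2_sum dsum_map_components_closed by auto

lemma dsum_map_eq_zero_iff:
  assumes "u \<in> carrier U"
  shows "dsum_map u = \<zero>\<^bsub>M\<^esub> \<longleftrightarrow> h1 (b1 u) = \<zero>\<^bsub>M1\<^esub> \<and> h2 (b2 u) = \<zero>\<^bsub>M2\<^esub>"
proof
  assume "dsum_map u = \<zero>\<^bsub>M\<^esub>"
  then show "h1 (b1 u) = \<zero>\<^bsub>M1\<^esub> \<and> h2 (b2 u) = \<zero>\<^bsub>M2\<^esub>"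
    using d1_dsum_map[OF assms] d2_dsum_map[OF assms] M.p1_zero M.p2_zero by simp
next
  assume "h1 (b1 u) = \<zero>\<^bsub>M1\<^esub> \<and> h2 (b2 u) = \<zero>\<^bsub>M2\<^esub>"
  then show "dsum_map u = \<zero>\<^bsub>M\<^esub>"
    unfolding dsum_map_def using M.i1_zero M.i2_zero by simp
qed

lemma dsum_map_image:
  "dsum_map ` carrier U = {m \<in> carrier M. d1 m \<in> h1 ` carrier U1 \<and> d2 m \<in> h2 ` carrier U2}"
proof
  show "dsum_map ` carrier U \<subseteq> {m \<in> carrier M. d1 m \<in> h1 ` carrier U1 \<and> d2 m \<in> h2 ` carrier U2}"
  proof (rule image_subsetI)
    fix u assume u: "u \<in> carrier U"
    show "dsum_map u \<in> {m \<in> carrier M. d1 m \<in> h1 ` carrier U1 \<and> d2 m \<in> h2 ` carrier U2}"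
      using mod_hom_closed[OF mod_hom_dsum_map u] d1_dsum_map[OF u] d2_dsum_map[OF u] U.closed(3,4)[OF u]
      by simp
  qed
  show "{m \<in> carrier M. d1 m \<in> h1 ` carrier U1 \<and> d2 m \<in> h2 ` carrier U2} \<subseteq> dsum_map ` carrier U"
  proof safe
    fix m y1 y2 assume m: "m \<in> carrier M" "y1 \<in> carrier U1" "y2 \<in> carrier U2"
      and d: "d1 m = h1 y1" "d2 m = h2 y2"
    have "dsum_map (a1 y1 \<oplus>\<^bsub>U\<^esub> a2 y2) = c1 (d1 m) \<oplus>\<^bsub>M\<^esub> c2 (d2 m)"
      unfolding dsum_map_def using U.p1_sum U.p2_sum m d by simp
    also have "\<dots> = m" using M.decomp m by simp
    finally show "m \<in> dsum_map ` carrier U"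
      using U.sum_closed m by (metis image_eqI)
  qed
qed

lemma inj_on_dsum_map:
  assumes "inj_on h1 (carrier U1)" "inj_on h2 (carrier U2)"
  shows "inj_on dsum_map (carrier U)"
proof (rule mod_hom_inj_onI[OF mod_hom_dsum_map U.lX M.lX])
  fix u assume u: "u \<in> carrier U" "dsum_map u = \<zero>\<^bsub>M\<^esub>"
  then have h: "h1 (b1 u) = \<zero>\<^bsub>M1\<^esub>" "h2 (b2 u) = \<zero>\<^bsub>M2\<^esub>"
    using dsum_map_eq_zero_iff by simp_all
  show "u = \<zero>\<^bsub>U\<^esub>"
    using mod_hom_inj_on_zero[OF hom1 U.lY M.lY assms(1) U.closed(3)[OF u(1)] h(1)]
      mod_hom_inj_on_zero[OF hom2 U.lZ M.lZ assms(2) U.closed(4)[OF u(1)] h(2)]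
      U.eq_zeroI[OF u(1)] by simp
qed

end

lemma ses_biprod:
  assumes "ses A U1 M1 V1" "ses A U2 M2 V2"
    and "is_biprod A U U1 U2" "is_biprod A M M1 M2" "is_biprod A V V1 V2"
    and "left_module A U" "left_module A U1" "left_module A U2"
    and "left_module A M" "left_module A M1" "left_module A M2"
    and "left_module A V" "left_module A V1" "left_module A V2"
  shows "ses A U M V"
proof -
  obtain f1 g1 where F1: "mod_hom A U1 M1 f1" "mod_hom A M1 V1 g1" "inj_on f1 (carrier U1)"
    "g1 ` carrier M1 = carrier V1" "f1 ` carrier U1 = {y \<in> carrier M1. g1 y = \<zero>\<^bsub>V1\<^esub>}"
    using sesE[OF assms(1)] .
  obtain f2 g2 where F2: "mod_hom A U2 M2 f2" "mod_hom A M2 V2 g2" "inj_on f2 (carrier U2)"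
    "g2 ` carrier M2 = carrier V2" "f2 ` carrier U2 = {y \<in> carrier M2. g2 y = \<zero>\<^bsub>V2\<^esub>}"
    using sesE[OF assms(2)] .
  obtain a1 a2 b1 b2 where BU: "biprod_maps A U U1 U2 a1 a2 b1 b2"
    using biprod_mapsE[OF assms(3,6-8)] .
  obtain c1 c2 d1 d2 where BM: "biprod_maps A M M1 M2 c1 c2 d1 d2"
    using biprod_mapsE[OF assms(4,9-11)] .
  obtain r1 r2 t1 t2 where BV: "biprod_maps A V V1 V2 r1 r2 t1 t2"
    using biprod_mapsE[OF assms(5,12-14)] .
  interpret f: biprod_hom A U U1 U2 a1 a2 b1 b2 M M1 M2 c1 c2 d1 d2 f1 f2
    using BU BM F1(1) F2(1) by (simp add: biprod_hom_def biprod_hom_axioms_def)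
  interpret g: biprod_hom A M M1 M2 c1 c2 d1 d2 V V1 V2 r1 r2 t1 t2 g1 g2
    using BM BV F1(2) F2(2) by (simp add: biprod_hom_def biprod_hom_axioms_def)
  have "g.dsum_map ` carrier M = carrier V"
    unfolding g.dsum_map_image using F1(4) F2(4) g.M.closed by auto
  moreover have "f.dsum_map ` carrier U = {m \<in> carrier M. g.dsum_map m = \<zero>\<^bsub>V\<^esub>}"
    unfolding f.dsum_map_image using g.dsum_map_eq_zero_iff F1(5) F2(5) f.M.closed by auto
  ultimately show ?thesis
    unfolding ses_def
    using f.mod_hom_dsum_map g.mod_hom_dsum_map f.inj_on_dsum_map[OF F1(3) F2(3)] by blast
qed

lemma mod_hom_factor:
  assumes "mod_hom A M N q" "q ` carrier M = carrier N" "mod_hom A M P g"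
    "left_module A M" "left_module A N" "left_module A P"
    "\<And>m. m \<in> carrier M \<Longrightarrow> q m = \<zero>\<^bsub>N\<^esub> \<Longrightarrow> g m = \<zero>\<^bsub>P\<^esub>"
  obtains h where "mod_hom A N P h" "\<And>m. m \<in> carrier M \<Longrightarrow> h (q m) = g m"
proof -
  interpret M: abelian_group M using lmod_abelian_group[OF assms(4)] .
  interpret N: abelian_group N using lmod_abelian_group[OF assms(5)] .
  define h where "h n = g (SOME m. m \<in> carrier M \<and> q m = n)" for n
  have h: "h (q m) = g m" if m: "m \<in> carrier M" for m
  proof -
    define m' where "m' = (SOME m'. m' \<in> carrier M \<and> q m' = q m)"
    have "m' \<in> carrier M \<and> q m' = q m"
      unfolding m'_def by (rule someI[of _ m]) (use m in simp)
    then have m': "m' \<in> carrier M" "q m' = q m" by simp_all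
    then have "q (m' \<ominus>\<^bsub>M\<^esub> m) = \<zero>\<^bsub>N\<^esub>"
      using mod_hom_diff[OF assms(1,4,5) m'(1) m] mod_hom_closed[OF assms(1) m]
      by (simp add: N.r_neg N.minus_eq)
    then have "g m' = g m"
      using m'(1) m assms(7) by (intro mod_hom_eq_if_diff_zero[OF assms(3,4,6)]) simp_all
    then show ?thesis by (simp add: h_def m'_def)
  qed
  have hom: "mod_hom A N P h"
    unfolding mod_hom_def
  proof (intro conjI ballI)
    show "h \<in> carrier N \<rightarrow> carrier P"
    proof
      fix x assume "x \<in> carrier N"
      then have "x \<in> q ` carrier M" by (simp add: assms(2))
      then show "h x \<in> carrier P" using h mod_hom_closed[OF assms(3)] by auto
    qed
    fix x y assume "x \<in> carrier N" "y \<in> carrier N"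
    then have "x \<in> q ` carrier M" "y \<in> q ` carrier M"
      by (simp_all add: assms(2))
    then obtain m m' where m: "m \<in> carrier M" "m' \<in> carrier M" "x = q m" "y = q m'"
      by blast
    then have "h (x \<oplus>\<^bsub>N\<^esub> y) = h (q (m \<oplus>\<^bsub>M\<^esub> m'))"
      using mod_hom_add[OF assms(1)] by simp
    also have "\<dots> = g m \<oplus>\<^bsub>P\<^esub> g m'"
      using h m mod_hom_add[OF assms(3)] by simp
    finally show "h (x \<oplus>\<^bsub>N\<^esub> y) = h x \<oplus>\<^bsub>P\<^esub> h y"
      using h m by simp
  next
    fix a x assume a: "a \<in> carrier A" and "x \<in> carrier N"
    then have "x \<in> q ` carrier M"
      by (simp add: assms(2))
    then obtain m where "m \<in> carrier M" "x = q m"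
      by blast
    then have "h (a \<odot>\<^bsub>N\<^esub> x) = h (q (a \<odot>\<^bsub>M\<^esub> m))"
      using mod_hom_smult[OF assms(1)] a by simp
    also have "\<dots> = a \<odot>\<^bsub>P\<^esub> g m"
      using h \<open>m \<in> carrier M\<close> mod_hom_smult[OF assms(3)] assms(4) a by simp
    finally show "h (a \<odot>\<^bsub>N\<^esub> x) = a \<odot>\<^bsub>P\<^esub> h x"
      using h \<open>m \<in> carrier M\<close> \<open>x = q m\<close> by simp
  qed
  show ?thesis by (rule that[OF hom h])
qed

text \<open>The quotient M/K is realised on the representatives chosen by SOME, so that it stays
  in the type 'a amod.\<close>

locale quotient_module =
  fixes A :: "'a ring" and M :: "'a amod" and K :: "'a list set set"
  assumes lM: "left_module A M" and K_subset: "K \<subseteq> carrier M" and zero_in_K: "\<zero>\<^bsub>M\<^esub> \<in> K"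
    and add_in_K: "\<And>x y. x \<in> K \<Longrightarrow> y \<in> K \<Longrightarrow> x \<oplus>\<^bsub>M\<^esub> y \<in> K"
    and minus_in_K: "\<And>x. x \<in> K \<Longrightarrow> \<ominus>\<^bsub>M\<^esub> x \<in> K"
    and smult_in_K: "\<And>a x. a \<in> carrier A \<Longrightarrow> x \<in> K \<Longrightarrow> a \<odot>\<^bsub>M\<^esub> x \<in> K"
begin

sublocale abelian_group M using lmod_abelian_group[OF lM] .

definition cong :: "'a list set \<Rightarrow> 'a list set \<Rightarrow> bool" where
  "cong x y \<longleftrightarrow> x \<ominus>\<^bsub>M\<^esub> y \<in> K"

definition rep :: "'a list set \<Rightarrow> 'a list set" where
  "rep x = (SOME y. y \<in> carrier M \<and> cong x y)"

lemma cong_refl: "x \<in> carrier M \<Longrightarrow> cong x x"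
  by (simp add: cong_def minus_eq r_neg zero_in_K)

lemma cong_sym: "x \<in> carrier M \<Longrightarrow> y \<in> carrier M \<Longrightarrow> cong x y \<Longrightarrow> cong y x"
proof -
  assume xy: "x \<in> carrier M" "y \<in> carrier M" "cong x y"
  have "y \<ominus>\<^bsub>M\<^esub> x = \<ominus>\<^bsub>M\<^esub> (x \<ominus>\<^bsub>M\<^esub> y)"
    using xy by (simp add: minus_eq minus_add a_comm)
  then show ?thesis using xy minus_in_K by (simp add: cong_def)
qed

lemma cong_trans:
  "x \<in> carrier M \<Longrightarrow> y \<in> carrier M \<Longrightarrow> z \<in> carrier M \<Longrightarrow> cong x y \<Longrightarrow> cong y z \<Longrightarrow> cong x z"
proof -
  assume xyz: "x \<in> carrier M" "y \<in> carrier M" "z \<in> carrier M" "cong x y" "cong y z"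
  have "x \<ominus>\<^bsub>M\<^esub> z = (x \<ominus>\<^bsub>M\<^esub> y) \<oplus>\<^bsub>M\<^esub> (y \<ominus>\<^bsub>M\<^esub> z)"
    using xyz by (simp add: minus_eq a_assoc r_neg1)
  then show ?thesis using xyz add_in_K by (simp add: cong_def)
qed

lemma cong_add:
  "x \<in> carrier M \<Longrightarrow> x' \<in> carrier M \<Longrightarrow> y \<in> carrier M \<Longrightarrow> cong x x' \<Longrightarrow>
    cong (x \<oplus>\<^bsub>M\<^esub> y) (x' \<oplus>\<^bsub>M\<^esub> y)"
proof -
  assume a: "x \<in> carrier M" "x' \<in> carrier M" "y \<in> carrier M" "cong x x'"
  have "(x \<oplus>\<^bsub>M\<^esub> y) \<ominus>\<^bsub>M\<^esub> (x' \<oplus>\<^bsub>M\<^esub> y) = x \<ominus>\<^bsub>M\<^esub> x'"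
    using a by (simp add: minus_eq minus_add a_ac r_neg)
  then show ?thesis using a by (simp add: cong_def)
qed

lemma cong_smult:
  assumes "a \<in> carrier A" "x \<in> carrier M" "x' \<in> carrier M" "cong x x'"
  shows "cong (a \<odot>\<^bsub>M\<^esub> x) (a \<odot>\<^bsub>M\<^esub> x')"
proof -
  have "a \<odot>\<^bsub>M\<^esub> (x \<ominus>\<^bsub>M\<^esub> x') \<in> K"
    using smult_in_K assms by (simp add: cong_def)
  then show ?thesis
    using assms by (simp add: cong_def lmod_smult_r_diff[OF lM])
qed

lemma rep: "x \<in> carrier M \<Longrightarrow> rep x \<in> carrier M \<and> cong x (rep x)"
  unfolding rep_def by (rule someI_ex) (use cong_refl in blast)

lemma rep_eq_iff: "x \<in> carrier M \<Longrightarrow> y \<in> carrier M \<Longrightarrow> rep x = rep y \<longleftrightarrow> cong x y"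
proof
  assume xy: "x \<in> carrier M" "y \<in> carrier M"
  show "rep x = rep y \<Longrightarrow> cong x y"
    using xy rep[OF xy(1)] rep[OF xy(2)] cong_sym cong_trans by metis
  assume "cong x y"
  then have "(\<lambda>z. z \<in> carrier M \<and> cong x z) = (\<lambda>z. z \<in> carrier M \<and> cong y z)"
    using xy cong_sym cong_trans by blast
  then show "rep x = rep y" unfolding rep_def by simp
qed

lemma rep_closed: "x \<in> carrier M \<Longrightarrow> rep x \<in> carrier M"
  using rep by blast

lemma rep_rep: "x \<in> carrier M \<Longrightarrow> rep (rep x) = rep x"
  using rep_eq_iff rep cong_sym by simp

lemma rep_add_rep: "x \<in> carrier M \<Longrightarrow> y \<in> carrier M \<Longrightarrow> rep (rep x \<oplus>\<^bsub>M\<^esub> y) = rep (x \<oplus>\<^bsub>M\<^esub> y)"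
  using rep_eq_iff rep cong_add cong_sym by simp

lemma rep_add_rep_right: "x \<in> carrier M \<Longrightarrow> y \<in> carrier M \<Longrightarrow> rep (y \<oplus>\<^bsub>M\<^esub> rep x) = rep (y \<oplus>\<^bsub>M\<^esub> x)"
  using rep_add_rep rep_closed a_comm by metis

lemma rep_smult_rep: "a \<in> carrier A \<Longrightarrow> x \<in> carrier M \<Longrightarrow> rep (a \<odot>\<^bsub>M\<^esub> rep x) = rep (a \<odot>\<^bsub>M\<^esub> x)"
  using rep_eq_iff rep cong_smult cong_sym lM by simp

definition quot :: "'a amod" where
  "quot = \<lparr>carrier = rep ` carrier M, mult = (\<lambda>_ _. {}), one = {}, zero = rep \<zero>\<^bsub>M\<^esub>,
     add = (\<lambda>u v. rep (u \<oplus>\<^bsub>M\<^esub> v)), smult = (\<lambda>a u. rep (a \<odot>\<^bsub>M\<^esub> u))\<rparr>"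

lemma quot_simps [simp]:
  "carrier quot = rep ` carrier M" "\<zero>\<^bsub>quot\<^esub> = rep \<zero>\<^bsub>M\<^esub>"
  "u \<oplus>\<^bsub>quot\<^esub> v = rep (u \<oplus>\<^bsub>M\<^esub> v)" "a \<odot>\<^bsub>quot\<^esub> u = rep (a \<odot>\<^bsub>M\<^esub> u)"
  by (simp_all add: quot_def)

lemma quot_carrier_M: "x \<in> carrier quot \<Longrightarrow> x \<in> carrier M"
  using rep_closed by auto

lemma abelian_group_quot: "abelian_group quot"
proof (rule abelian_groupI)
  fix x y z assume xyz: "x \<in> carrier quot" "y \<in> carrier quot" "z \<in> carrier quot"
  then have "x \<in> carrier M" "y \<in> carrier M" "z \<in> carrier M"
    by (simp_all add: quot_carrier_M)
  then show "x \<oplus>\<^bsub>quot\<^esub> y \<oplus>\<^bsub>quot\<^esub> z = x \<oplus>\<^bsub>quot\<^esub> (y \<oplus>\<^bsub>quot\<^esub> z)"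
    and "x \<oplus>\<^bsub>quot\<^esub> y = y \<oplus>\<^bsub>quot\<^esub> x"
    by (simp_all add: rep_add_rep rep_add_rep_right a_ac)
  show "x \<oplus>\<^bsub>quot\<^esub> y \<in> carrier quot"
    using \<open>x \<in> carrier M\<close> \<open>y \<in> carrier M\<close> by simp
next
  fix x assume "x \<in> carrier quot"
  then obtain z where z: "z \<in> carrier M" "x = rep z" by auto
  then show "\<zero>\<^bsub>quot\<^esub> \<oplus>\<^bsub>quot\<^esub> x = x"
    by (simp add: rep_add_rep rep_rep rep_closed)
  have "rep (\<ominus>\<^bsub>M\<^esub> z) \<oplus>\<^bsub>quot\<^esub> x = rep (\<ominus>\<^bsub>M\<^esub> z \<oplus>\<^bsub>M\<^esub> z)"
    using z by (simp add: rep_add_rep rep_add_rep_right rep_closed a_inv_closed)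
  also have "\<dots> = \<zero>\<^bsub>quot\<^esub>"
    using z by (simp add: l_neg)
  finally show "\<exists>y\<in>carrier quot. y \<oplus>\<^bsub>quot\<^esub> x = \<zero>\<^bsub>quot\<^esub>"
    using z by (intro bexI[of _ "rep (\<ominus>\<^bsub>M\<^esub> z)"]) auto
qed simp

lemma lmod_quot: "left_module A quot"
proof -
  interpret R: ring A using lmod_ring[OF lM] .
  note M = quot_carrier_M
  note simps = rep_add_rep rep_add_rep_right rep_smult_rep rep_closed
    lmod_smult_l_distr[OF lM] lmod_smult_r_distr[OF lM] lmod_smult_assoc[OF lM] lmod_smult_one[OF lM]
  show ?thesis
    unfolding left_module_def
  proof (intro conjI ballI abelian_group_quot R.ring_axioms)
    fix a x assume "a \<in> carrier A" "x \<in> carrier quot"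
    then show "a \<odot>\<^bsub>quot\<^esub> x \<in> carrier quot" using M lM by simp
  next
    fix a b x assume "a \<in> carrier A" "b \<in> carrier A" "x \<in> carrier quot"
    then show "(a \<oplus>\<^bsub>A\<^esub> b) \<odot>\<^bsub>quot\<^esub> x = a \<odot>\<^bsub>quot\<^esub> x \<oplus>\<^bsub>quot\<^esub> b \<odot>\<^bsub>quot\<^esub> x"
      using M lM by (simp add: simps)
  next
    fix a x y assume "a \<in> carrier A" "x \<in> carrier quot" "y \<in> carrier quot"
    then show "a \<odot>\<^bsub>quot\<^esub> (x \<oplus>\<^bsub>quot\<^esub> y) = a \<odot>\<^bsub>quot\<^esub> x \<oplus>\<^bsub>quot\<^esub> a \<odot>\<^bsub>quot\<^esub> y"
      using M lM by (simp add: simps)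
  next
    fix a b x assume "a \<in> carrier A" "b \<in> carrier A" "x \<in> carrier quot"
    then show "(a \<otimes>\<^bsub>A\<^esub> b) \<odot>\<^bsub>quot\<^esub> x = a \<odot>\<^bsub>quot\<^esub> (b \<odot>\<^bsub>quot\<^esub> x)"
      using M lM by (simp add: simps)
  next
    fix x assume "x \<in> carrier quot"
    then show "\<one>\<^bsub>A\<^esub> \<odot>\<^bsub>quot\<^esub> x = x"
      using lM by (auto simp: simps rep_rep)
  qed
qed

lemma mod_hom_rep: "mod_hom A M quot rep"
  unfolding mod_hom_def using rep_closed rep_add_rep rep_add_rep_right rep_smult_rep by auto

lemma rep_eq_zero_iff:
  assumes "m \<in> carrier M"
  shows "rep m = \<zero>\<^bsub>quot\<^esub> \<longleftrightarrow> m \<in> K"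
proof -
  have "\<ominus>\<^bsub>M\<^esub> \<zero>\<^bsub>M\<^esub> = \<zero>\<^bsub>M\<^esub>"
    by (rule minus_equality) simp_all
  then have "m \<ominus>\<^bsub>M\<^esub> \<zero>\<^bsub>M\<^esub> = m"
    using assms by (simp add: minus_eq)
  then show ?thesis
    using rep_eq_iff[OF assms zero_closed] by (simp add: cong_def)
qed

end

lemma cokernel_exists:
  assumes "mod_hom A X M k" "X \<in> Amod A" "M \<in> Amod A"
  shows "\<exists>Q\<in>Amod A. \<exists>q. mod_hom A M Q q \<and> q ` carrier M = carrier Q \<and>
           (\<forall>m\<in>carrier M. q m = \<zero>\<^bsub>Q\<^esub> \<longleftrightarrow> m \<in> k ` carrier X)"
proof -
  have l: "left_module A X" "left_module A M" "fin_gen A M"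
    using assms by (auto simp: Amod_def)
  interpret X: abelian_group X using lmod_abelian_group[OF l(1)] .
  interpret quotient_module A M "k ` carrier X"
  proof
    show "left_module A M" by (rule l(2))
    show "k ` carrier X \<subseteq> carrier M"
      using mod_hom_closed[OF assms(1)] by blast
    show "\<zero>\<^bsub>M\<^esub> \<in> k ` carrier X"
      using mod_hom_zero[OF assms(1) l(1,2)] by (intro image_eqI[of _ _ "\<zero>\<^bsub>X\<^esub>"]) simp_all
  next
    fix x y assume "x \<in> k ` carrier X" "y \<in> k ` carrier X"
    then obtain a b where "a \<in> carrier X" "b \<in> carrier X" "x = k a" "y = k b" by blast
    then show "x \<oplus>\<^bsub>M\<^esub> y \<in> k ` carrier X"
      using mod_hom_add[OF assms(1)] by (intro image_eqI[of _ _ "a \<oplus>\<^bsub>X\<^esub> b"]) simp_all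
  next
    fix x assume "x \<in> k ` carrier X"
    then obtain a where "a \<in> carrier X" "x = k a" by blast
    then show "\<ominus>\<^bsub>M\<^esub> x \<in> k ` carrier X"
      using mod_hom_minus[OF assms(1) l(1,2)] by (intro image_eqI[of _ _ "\<ominus>\<^bsub>X\<^esub> a"]) simp_all
  next
    fix a x assume "a \<in> carrier A" "x \<in> k ` carrier X"
    then obtain b where "b \<in> carrier X" "x = k b" by blast
    then show "a \<odot>\<^bsub>M\<^esub> x \<in> k ` carrier X"
      using mod_hom_smult[OF assms(1)] \<open>a \<in> carrier A\<close> l(1)
      by (intro image_eqI[of _ _ "a \<odot>\<^bsub>X\<^esub> b"]) simp_all
  qed
  have "fin_gen A quot"
    by (rule fin_gen_image[OF mod_hom_rep l(2) lmod_quot l(3)]) simp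
  then have "quot \<in> Amod A"
    using lmod_quot by (simp add: Amod_def)
  then show ?thesis
    using mod_hom_rep rep_eq_zero_iff by (intro bexI[of _ quot] exI[of _ rep]) auto
qed

lemma induced_ses:
  assumes f0: "mod_hom A X0 W0 f0" and g0: "mod_hom A W0 Y0 g0" "g0 ` carrier W0 = carrier Y0"
      "f0 ` carrier X0 = {w \<in> carrier W0. g0 w = \<zero>\<^bsub>Y0\<^esub>}"
    and f: "mod_hom A W0 M f" "inj_on f (carrier W0)"
    and g: "g ` carrier M = carrier V" "f ` carrier W0 = {m \<in> carrier M. g m = \<zero>\<^bsub>V\<^esub>}"
    and q: "q ` carrier M = carrier Q"
      "\<And>m. m \<in> carrier M \<Longrightarrow> q m = \<zero>\<^bsub>Q\<^esub> \<longleftrightarrow> m \<in> (\<lambda>x. f (f0 x)) ` carrier X0"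
    and h: "mod_hom A Y0 Q h" "\<And>w. w \<in> carrier W0 \<Longrightarrow> h (g0 w) = q (f w)"
    and p: "mod_hom A Q V p" "\<And>m. m \<in> carrier M \<Longrightarrow> p (q m) = g m"
    and l: "left_module A Y0" "left_module A Q"
  shows "ses A Y0 Q V"
proof -
  have Y0: "y \<in> g0 ` carrier W0" if "y \<in> carrier Y0" for y
    using that g0(2) by simp
  have Q: "z \<in> q ` carrier M" if "z \<in> carrier Q" for z
    using that q(1) by simp
  have "inj_on h (carrier Y0)"
  proof (rule mod_hom_inj_onI[OF h(1) l])
    fix y assume y: "y \<in> carrier Y0" "h y = \<zero>\<^bsub>Q\<^esub>"
    obtain w where w: "w \<in> carrier W0" "y = g0 w" using Y0[OF y(1)] by blast
    have "f w \<in> carrier M" using mod_hom_closed[OF f(1) w(1)] .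
    moreover have "q (f w) = \<zero>\<^bsub>Q\<^esub>" using h(2)[OF w(1)] y(2) w(2) by simp
    ultimately obtain x where x: "x \<in> carrier X0" "f w = f (f0 x)"
      using q(2) by blast
    then have "w = f0 x"
      using f(2) mod_hom_closed[OF f0] w(1) by (auto simp: inj_on_def)
    moreover have "f0 x \<in> f0 ` carrier X0" using x(1) by blast
    ultimately show "y = \<zero>\<^bsub>Y0\<^esub>" using g0(3) w(2) by simp
  qed
  moreover have "p ` carrier Q = carrier V"
  proof -
    have "p ` carrier Q = (\<lambda>m. p (q m)) ` carrier M"
      by (simp add: q(1)[symmetric] image_image)
    also have "\<dots> = g ` carrier M"
      using p(2) by (rule image_cong[OF refl])
    finally show ?thesis using g(1) by simp
  qed
  moreover have "h ` carrier Y0 = {z \<in> carrier Q. p z = \<zero>\<^bsub>V\<^esub>}"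
  proof (intro equalityI subsetI)
    fix z assume "z \<in> h ` carrier Y0"
    then obtain w where w: "w \<in> carrier W0" "z = h (g0 w)" using Y0 by blast
    have "f w \<in> f ` carrier W0" using w(1) by blast
    then have "g (f w) = \<zero>\<^bsub>V\<^esub>" using g(2) by simp
    moreover have "f w \<in> carrier M" using mod_hom_closed[OF f(1) w(1)] .
    ultimately show "z \<in> {z \<in> carrier Q. p z = \<zero>\<^bsub>V\<^esub>}"
      using w h(2) p(2) q(1) by auto
  next
    fix z assume "z \<in> {z \<in> carrier Q. p z = \<zero>\<^bsub>V\<^esub>}"
    then have z: "z \<in> carrier Q" "p z = \<zero>\<^bsub>V\<^esub>" by simp_all
    obtain m where m: "m \<in> carrier M" "z = q m" using Q[OF z(1)] by blast
    then have "m \<in> f ` carrier W0" using g(2) p(2) z(2) by simp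
    then obtain w where "w \<in> carrier W0" "m = f w" by blast
    then show "z \<in> h ` carrier Y0"
      using h(2) m(2) mod_hom_closed[OF g0(1)] by (intro image_eqI[of _ _ "g0 w"]) simp_all
  qed
  ultimately show ?thesis
    unfolding ses_def using h(1) p(1) by blast
qed

text \<open>The third isomorphism theorem in disguise: Q = M/X0 contains Y0 = W0/X0 with quotient
  V = M/W0.\<close>

lemma ses_compose:
  assumes "ses A X0 W0 Y0" "ses A W0 M V"
    and "X0 \<in> Amod A" "W0 \<in> Amod A" "Y0 \<in> Amod A" "M \<in> Amod A" "V \<in> Amod A"
  shows "\<exists>Q\<in>Amod A. ses A X0 M Q \<and> ses A Y0 Q V"
proof -
  have l: "left_module A X0" "left_module A W0" "left_module A Y0" "left_module A M" "left_module A V"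
    using assms(3-7) by (auto simp: Amod_def)
  obtain f0 g0 where F0: "mod_hom A X0 W0 f0" "mod_hom A W0 Y0 g0" "inj_on f0 (carrier X0)"
    "g0 ` carrier W0 = carrier Y0" "f0 ` carrier X0 = {w \<in> carrier W0. g0 w = \<zero>\<^bsub>Y0\<^esub>}"
    using sesE[OF assms(1)] .
  obtain f g where F: "mod_hom A W0 M f" "mod_hom A M V g" "inj_on f (carrier W0)"
    "g ` carrier M = carrier V" "f ` carrier W0 = {m \<in> carrier M. g m = \<zero>\<^bsub>V\<^esub>}"
    using sesE[OF assms(2)] .
  have hk: "mod_hom A X0 M (\<lambda>x. f (f0 x))" by (rule mod_hom_comp[OF F0(1) F(1)])
  obtain Q q where Q: "Q \<in> Amod A" "mod_hom A M Q q" "q ` carrier M = carrier Q"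
    "\<forall>m\<in>carrier M. q m = \<zero>\<^bsub>Q\<^esub> \<longleftrightarrow> m \<in> (\<lambda>x. f (f0 x)) ` carrier X0"
    using cokernel_exists[OF hk assms(3,6)] by (elim bexE exE conjE)
  have lQ: "left_module A Q" using Q(1) by (simp add: Amod_def)
  have "inj_on (\<lambda>x. f (f0 x)) (carrier X0)"
    using F0(3) F(3) mod_hom_closed[OF F0(1)] by (auto simp: inj_on_def)
  moreover have "(\<lambda>x. f (f0 x)) ` carrier X0 = {m \<in> carrier M. q m = \<zero>\<^bsub>Q\<^esub>}"
  proof (intro equalityI subsetI)
    fix m assume m: "m \<in> (\<lambda>x. f (f0 x)) ` carrier X0"
    then have "m \<in> carrier M" using mod_hom_closed[OF hk] by blast
    then show "m \<in> {m \<in> carrier M. q m = \<zero>\<^bsub>Q\<^esub>}" using Q(4) m by simp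
  next
    fix m assume "m \<in> {m \<in> carrier M. q m = \<zero>\<^bsub>Q\<^esub>}"
    then have m: "m \<in> carrier M" "q m = \<zero>\<^bsub>Q\<^esub>" by simp_all
    then show "m \<in> (\<lambda>x. f (f0 x)) ` carrier X0" using Q(4)[rule_format, OF m(1)] by simp
  qed
  ultimately have ses1: "ses A X0 M Q"
    unfolding ses_def using hk Q(2,3) by blast
  obtain h where h: "mod_hom A Y0 Q h" "\<And>w. w \<in> carrier W0 \<Longrightarrow> h (g0 w) = q (f w)"
  proof (rule mod_hom_factor[OF F0(2,4) mod_hom_comp[OF F(1) Q(2)] l(2,3) lQ])
    fix w assume "w \<in> carrier W0" "g0 w = \<zero>\<^bsub>Y0\<^esub>"
    then have "w \<in> f0 ` carrier X0" using F0(5) by simp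
    then obtain x where "x \<in> carrier X0" "w = f0 x" by blast
    then show "q (f w) = \<zero>\<^bsub>Q\<^esub>" using Q(4) mod_hom_closed[OF hk] by simp
  qed (rule that)
  obtain p where p: "mod_hom A Q V p" "\<And>m. m \<in> carrier M \<Longrightarrow> p (q m) = g m"
  proof (rule mod_hom_factor[OF Q(2,3) F(2) l(4) lQ l(5)])
    fix m assume "m \<in> carrier M" "q m = \<zero>\<^bsub>Q\<^esub>"
    then have "m \<in> (\<lambda>x. f (f0 x)) ` carrier X0" using Q(4) by simp
    then obtain x where x: "x \<in> carrier X0" "m = f (f0 x)" by blast
    then have "m \<in> f ` carrier W0" using mod_hom_closed[OF F0(1)] by blast
    then show "g m = \<zero>\<^bsub>V\<^esub>" using F(5) by simp
  qed (rule that)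
  have "ses A Y0 Q V"
    by (rule induced_ses[OF F0(1,2,4,5) F(1,3,4,5) Q(3) Q(4)[rule_format] h p l(3) lQ])
  then show ?thesis using Q(1) ses1 by blast
qed


section \<open>Extensions, layers and the extension dimension\<close>

definition extensions :: "'a ring \<Rightarrow> 'a amod set \<Rightarrow> 'a amod set \<Rightarrow> 'a amod set" where
  "extensions A X Y = {E \<in> Amod A. \<exists>M1\<in>X. \<exists>M2\<in>Y. ses A M1 E M2}"

lemma bullet_eq_addc_extensions: "bullet A X Y = addc A (extensions A X Y)"
  by (simp add: bullet_def extensions_def)

lemma extensions_subset_Amod: "extensions A X Y \<subseteq> Amod A"
  by (auto simp: extensions_def)

definition dsum_closed :: "'a ring \<Rightarrow> 'a amod set \<Rightarrow> bool" where
  "dsum_closed A S \<longleftrightarrow> S \<subseteq> Amod A \<and> (\<forall>M\<in>Amod A. zero_mod M \<longrightarrow> M \<in> S) \<and>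
     (\<forall>Y\<in>S. \<forall>Z\<in>S. \<forall>X\<in>Amod A. is_biprod A X Y Z \<longrightarrow> X \<in> S)"

lemma subcat_dsum_closed: "subcat A C \<Longrightarrow> dsum_closed A C"
  unfolding subcat_def dsum_closed_def by (elim conjE) (intro conjI; assumption)

lemma dsum_closed_addc: "S \<subseteq> Amod A \<Longrightarrow> dsum_closed A (addc A S)"
  unfolding dsum_closed_def using addc_subset_Amod zero_mod_in_addc addc_biprod_closed by blast

lemma dsum_closed_bullet: "dsum_closed A (bullet A X Y)"
  unfolding bullet_eq_addc_extensions by (rule dsum_closed_addc[OF extensions_subset_Amod])

lemma dsums_subset: "dsum_closed A S \<Longrightarrow> dsums A S \<subseteq> S"
proof
  fix W assume S: "dsum_closed A S" and "W \<in> dsums A S"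
  from this(2) show "W \<in> S"
  proof (induction rule: dsums.induct)
    case (dsums_zero M)
    then show ?case using S by (simp add: dsum_closed_def)
  next
    case (dsums_step Y Z X)
    then show ?case using S unfolding dsum_closed_def by blast
  qed
qed

lemma bullet_mono: "X \<subseteq> X' \<Longrightarrow> Y \<subseteq> Y' \<Longrightarrow> bullet A X Y \<subseteq> bullet A X' Y'"
  unfolding bullet_eq_addc_extensions
  by (rule addc_mono[OF _ extensions_subset_Amod]) (auto simp: extensions_def)

lemma extensions_subset_bullet: "extensions A X Y \<subseteq> bullet A X Y"
  unfolding bullet_eq_addc_extensions by (rule subset_addc[OF extensions_subset_Amod])

lemma dsum_closed_extensions:
  assumes "dsum_closed A X" "dsum_closed A Y"
  shows "dsum_closed A (extensions A X Y)"
  unfolding dsum_closed_def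
proof (intro conjI ballI impI)
  show "extensions A X Y \<subseteq> Amod A" by (rule extensions_subset_Amod)
next
  fix M assume M: "M \<in> Amod A" "zero_mod M"
  then have "M \<in> X" "M \<in> Y" "left_module A M"
    using assms by (auto simp: dsum_closed_def Amod_def)
  moreover have "ses A M M M"
    using ses_zero_right \<open>left_module A M\<close> M(2) by blast
  ultimately show "M \<in> extensions A X Y"
    using M(1) by (auto simp: extensions_def)
next
  fix M1 M2 E assume E: "M1 \<in> extensions A X Y" "M2 \<in> extensions A X Y" "E \<in> Amod A"
    "is_biprod A E M1 M2"
  obtain U1 V1 where 1: "U1 \<in> X" "V1 \<in> Y" "ses A U1 M1 V1" "M1 \<in> Amod A"
    using E(1) by (auto simp: extensions_def)
  obtain U2 V2 where 2: "U2 \<in> X" "V2 \<in> Y" "ses A U2 M2 V2" "M2 \<in> Amod A"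
    using E(2) by (auto simp: extensions_def)
  have XY: "X \<subseteq> Amod A" "Y \<subseteq> Amod A" using assms by (auto simp: dsum_closed_def)
  then have A: "U1 \<in> Amod A" "U2 \<in> Amod A" "V1 \<in> Amod A" "V2 \<in> Amod A"
    using 1 2 by blast+
  obtain U where U: "U \<in> Amod A" "is_biprod A U U1 U2"
    using biprod_exists[OF A(1,2)] by blast
  obtain V where V: "V \<in> Amod A" "is_biprod A V V1 V2"
    using biprod_exists[OF A(3,4)] by blast
  have "U \<in> X"
    using assms(1) U 1(1) 2(1) unfolding dsum_closed_def by blast
  moreover have "V \<in> Y"
    using assms(2) V 1(2) 2(2) unfolding dsum_closed_def by blast
  moreover have "ses A U E V"
    by (rule ses_biprod[OF 1(3) 2(3) U(2) E(4) V(2)])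
      (use U(1) V(1) E(3) 1(4) 2(4) A in \<open>simp_all add: Amod_def\<close>)
  ultimately show "E \<in> extensions A X Y"
    using E(3) by (auto simp: extensions_def)
qed

text \<open>The key step of associativity: an extension of V \<in> Z by a summand U of an extension W
  of Y0 \<in> Y by X0 \<in> X. Adding the complement of U to the middle term gives an extension M'
  of V by W, which is then re-bracketed by ses_compose.\<close>

lemma extensions_bullet_subset:
  assumes "dsum_closed A X" "dsum_closed A Y" "Z \<subseteq> Amod A" "ring A"
  shows "extensions A (bullet A X Y) Z \<subseteq> bullet A X (bullet A Y Z)"
proof
  fix M assume "M \<in> extensions A (bullet A X Y) Z"
  then obtain U V where M: "M \<in> Amod A" "U \<in> bullet A X Y" "V \<in> Z" "ses A U M V"
    by (auto simp: extensions_def)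
  obtain W C where W: "W \<in> dsums A (extensions A X Y)" "C \<in> Amod A" "is_biprod A W U C"
    and UA: "U \<in> Amod A"
    using M(2) unfolding bullet_eq_addc_extensions addc_def by blast
  have "W \<in> extensions A X Y"
    using dsums_subset[OF dsum_closed_extensions[OF assms(1,2)]] W(1) by blast
  then obtain X0 Y0 where X0: "X0 \<in> X" "Y0 \<in> Y" "ses A X0 W Y0" "W \<in> Amod A"
    by (auto simp: extensions_def)
  have A: "X0 \<in> Amod A" "Y0 \<in> Amod A" "V \<in> Amod A"
    using X0(1,2) M(3) assms(1-3) by (auto simp: dsum_closed_def)
  obtain M' where M': "M' \<in> Amod A" "is_biprod A M' M C"
    using biprod_exists[OF M(1) W(2)] by blast
  have l: "left_module A M" "left_module A M'" "left_module A U" "left_module A V"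
    "left_module A W" "left_module A C" "left_module A zero_module"
    using M(1) M'(1) UA A(3) X0(4) W(2) zero_module_Amod[OF assms(4)] by (simp_all add: Amod_def)
  have "ses A W M' V"
    by (rule ses_biprod[OF M(4) ses_zero_right[OF l(6,7) zero_mod_zero_module] W(3) M'(2)
          biprod_zero_right[OF l(4,7) zero_mod_zero_module]]) (simp_all add: l)
  from ses_compose[OF X0(3) this A(1) X0(4) A(2) M'(1) A(3)]
  obtain Q where Q: "Q \<in> Amod A" "ses A X0 M' Q" "ses A Y0 Q V"
    by blast
  have "Q \<in> extensions A Y Z"
    using Q X0(2) M(3) by (auto simp: extensions_def)
  then have "Q \<in> bullet A Y Z"
    using extensions_subset_bullet by blast
  then have "M' \<in> extensions A X (bullet A Y Z)"
    using Q(2) X0(1) M'(1) by (auto simp: extensions_def)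
  then have M'_in: "M' \<in> bullet A X (bullet A Y Z)"
    using extensions_subset_bullet by blast
  obtain i1 i2 p1 p2 where "biprod_maps A M' M C i1 i2 p1 p2"
    using biprod_mapsE[OF M'(2) l(2,1,6)] .
  then interpret biprod_maps A M' M C i1 i2 p1 p2 .
  show "M \<in> bullet A X (bullet A Y Z)"
    using M'_in unfolding bullet_eq_addc_extensions[of A X "bullet A Y Z"]
    by (rule addc_retract_closed[OF _ M(1) hi1 hp1 p1_i1 extensions_subset_Amod])
qed

lemma bullet_assoc_subset:
  assumes "dsum_closed A X" "dsum_closed A Y" "Z \<subseteq> Amod A" "ring A"
  shows "bullet A (bullet A X Y) Z \<subseteq> bullet A X (bullet A Y Z)"
proof -
  have "bullet A (bullet A X Y) Z \<subseteq> addc A (bullet A X (bullet A Y Z))"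
    unfolding bullet_eq_addc_extensions[of A "bullet A X Y"]
    by (rule addc_mono[OF extensions_bullet_subset[OF assms]])
      (simp add: bullet_eq_addc_extensions addc_subset_Amod)
  also have "\<dots> \<subseteq> bullet A X (bullet A Y Z)"
    unfolding bullet_eq_addc_extensions[of A X] by (rule addc_addc_subset[OF extensions_subset_Amod])
  finally show ?thesis .
qed

lemma dsum_closed_layer: "T \<in> Amod A \<Longrightarrow> dsum_closed A (layer A T (Suc n))"
  by (cases n) (auto intro: dsum_closed_addc dsum_closed_bullet)

lemma bullet_layer_layer:
  assumes "T \<in> Amod A" "ring A"
  shows "bullet A (layer A T (Suc a)) (layer A T (Suc b)) \<subseteq> layer A T (Suc a + Suc b)"
proof (induction a)
  case 0
  then show ?case by simp
next
  case (Suc a)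
  let ?T = "addc A {T}"
  have "dsum_closed A ?T" using dsum_closed_addc assms(1) by blast
  moreover have "layer A T (Suc b) \<subseteq> Amod A"
    using dsum_closed_layer[OF assms(1)] by (simp add: dsum_closed_def)
  ultimately have "bullet A (bullet A ?T (layer A T (Suc a))) (layer A T (Suc b))
      \<subseteq> bullet A ?T (bullet A (layer A T (Suc a)) (layer A T (Suc b)))"
    by (rule bullet_assoc_subset[OF _ dsum_closed_layer[OF assms(1)] _ assms(2)])
  also have "\<dots> \<subseteq> bullet A ?T (layer A T (Suc a + Suc b))"
    by (rule bullet_mono[OF subset_refl Suc])
  finally show ?case by simp
qed

lemma layer_mono_generator:
  assumes "addc A {T'} \<subseteq> addc A {T}"
  shows "layer A T' (Suc n) \<subseteq> layer A T (Suc n)"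
proof (induction n)
  case (Suc n)
  then show ?case using assms by (simp add: bullet_mono)
qed (use assms in simp)

lemma bullets_subset_layer:
  assumes "T \<in> Amod A" "ring A"
  shows "Cs \<noteq> [] \<Longrightarrow> (\<And>C. C \<in> set Cs \<Longrightarrow> C \<subseteq> layer A T (Suc (n C))) \<Longrightarrow>
    bullets A Cs \<subseteq> layer A T (\<Sum>C\<leftarrow>Cs. Suc (n C))"
proof (induction Cs)
  case Nil
  then show ?case by simp
next
  case (Cons C Cs)
  show ?case
  proof (cases "Cs = []")
    case True
    then show ?thesis using Cons.prems(2) by simp
  next
    case False
    then obtain D Ds m where Cs: "Cs = D # Ds" and m: "(\<Sum>C\<leftarrow>Cs. Suc (n C)) = Suc m"
      by (cases Cs) auto
    have "bullets A Cs \<subseteq> layer A T (Suc m)"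
      using Cons.IH Cons.prems(2) False m by simp
    then have "bullets A (C # Cs) \<subseteq> bullet A (layer A T (Suc (n C))) (layer A T (Suc m))"
      using Cons.prems(2) Cs by (simp add: bullet_mono)
    also have "\<dots> \<subseteq> layer A T (Suc (n C) + Suc m)"
      by (rule bullet_layer_layer[OF assms])
    finally show ?thesis using m by simp
  qed
qed

lemma ed_le_enatI: "T \<in> Amod A \<Longrightarrow> C \<subseteq> layer A T (n + 1) \<Longrightarrow> ed A C \<le> enat n"
  unfolding ed_def by (rule Inf_lower) blast

lemma ed_mono: "C \<subseteq> D \<Longrightarrow> ed A C \<le> ed A D"
  unfolding ed_def by (rule Inf_superset_mono) blast

lemma ed_enatE:
  assumes "ed A C = enat n"
  obtains T where "T \<in> Amod A" "C \<subseteq> layer A T (n + 1)"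
proof -
  let ?S = "{enat n | n. \<exists>T\<in>Amod A. C \<subseteq> layer A T (n + 1)}"
  have nonempty: "?S \<noteq> {}"
  proof
    assume "?S = {}"
    then have "ed A C = \<infinity>" unfolding ed_def by (simp only: Inf_enat_def) simp
    then show False using assms by simp
  qed
  then obtain x where "x \<in> ?S" by blast
  then have "(LEAST x. x \<in> ?S) \<in> ?S" by (rule LeastI)
  moreover have "Inf ?S = (LEAST x. x \<in> ?S)"
    by (subst Inf_enat_def) (simp only: nonempty if_False)
  ultimately have "Inf ?S \<in> ?S" by simp
  then show ?thesis
    using assms that unfolding ed_def by auto
qed

lemma common_generator:
  assumes "ring A"
  shows "finite Ts \<Longrightarrow> Ts \<subseteq> Amod A \<Longrightarrow> \<exists>T\<in>Amod A. \<forall>T'\<in>Ts. addc A {T'} \<subseteq> addc A {T}"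
proof (induction Ts rule: finite_induct)
  case empty
  then show ?case using zero_module_Amod[OF assms] by blast
next
  case (insert T1 Ts)
  obtain T' where T': "T' \<in> Amod A" "\<forall>T''\<in>Ts. addc A {T''} \<subseteq> addc A {T'}"
    using insert by auto
  have T1: "T1 \<in> Amod A" using insert by auto
  obtain T where T: "T \<in> Amod A" "is_biprod A T T1 T'"
    using biprod_exists[OF T1 T'(1)] by blast
  have "left_module A T" "left_module A T1" "left_module A T'"
    using T(1) T1 T'(1) by (simp_all add: Amod_def)
  then obtain i1 i2 p1 p2 where "biprod_maps A T T1 T' i1 i2 p1 p2"
    using biprod_mapsE[OF T(2)] by blast
  then interpret biprod_maps A T T1 T' i1 i2 p1 p2 .
  have gen: "{T} \<subseteq> Amod A" "T \<in> addc A {T}"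
    using T(1) subset_addc[of "{T}" A] by auto
  have "addc A {S} \<subseteq> addc A {T}" if "S \<in> addc A {T}" for S
    using addc_mono[of "{S}" "addc A {T}" A] that addc_subset_Amod addc_addc_subset[OF gen(1)] by blast
  then have "addc A {T1} \<subseteq> addc A {T}" "addc A {T'} \<subseteq> addc A {T}"
    using addc_retract_closed[OF gen(2) T1 hi1 hp1 p1_i1 gen(1)]
      addc_retract_closed[OF gen(2) T'(1) hi2 hp2 p2_i2 gen(1)] by blast+
  then show ?case using T(1) T'(2) by blast
qed

lemma subset_bullet_left:
  assumes "dsum_closed A X" "dsum_closed A Y" "ring A"
  shows "X \<subseteq> bullet A X Y"
proof
  fix M assume M: "M \<in> X"
  then have MA: "M \<in> Amod A" using assms(1) by (auto simp: dsum_closed_def)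
  have "zero_module \<in> Y"
    using assms(2) zero_module_Amod[OF assms(3)] zero_mod_zero_module
    unfolding dsum_closed_def by blast
  moreover have "ses A M M zero_module"
  proof (rule ses_zero_right[OF _ _ zero_mod_zero_module])
    show "left_module A M" "left_module A zero_module"
      using MA zero_module_Amod[OF assms(3)] by (simp_all add: Amod_def)
  qed
  ultimately have "M \<in> extensions A X Y"
    using M MA unfolding extensions_def by blast
  then show "M \<in> bullet A X Y" using extensions_subset_bullet by blast
qed

lemma subset_bullet_right:
  assumes "dsum_closed A X" "dsum_closed A Y" "ring A"
  shows "Y \<subseteq> bullet A X Y"
proof
  fix M assume M: "M \<in> Y"
  then have MA: "M \<in> Amod A" using assms(2) by (auto simp: dsum_closed_def)
  have "zero_module \<in> X"
    using assms(1) zero_module_Amod[OF assms(3)] zero_mod_zero_module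
    unfolding dsum_closed_def by blast
  moreover have "ses A zero_module M M"
  proof (rule ses_zero_left[OF _ _ zero_mod_zero_module])
    show "left_module A M" "left_module A zero_module"
      using MA zero_module_Amod[OF assms(3)] by (simp_all add: Amod_def)
  qed
  ultimately have "M \<in> extensions A X Y"
    using M MA unfolding extensions_def by blast
  then show "M \<in> bullet A X Y" using extensions_subset_bullet by blast
qed

lemma dsum_closed_bullets:
  "Cs \<noteq> [] \<Longrightarrow> (\<And>C. C \<in> set Cs \<Longrightarrow> dsum_closed A C) \<Longrightarrow> dsum_closed A (bullets A Cs)"
  by (induction A Cs rule: bullets.induct) (simp_all add: dsum_closed_bullet)

lemma subset_bullets:
  assumes "ring A"
  shows "(\<And>C. C \<in> set Cs \<Longrightarrow> dsum_closed A C) \<Longrightarrow> C \<in> set Cs \<Longrightarrow> C \<subseteq> bullets A Cs"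
proof (induction Cs)
  case Nil
  then show ?case by simp
next
  case (Cons C' Cs)
  show ?case
  proof (cases "Cs = []")
    case True
    then show ?thesis using Cons.prems(2) by simp
  next
    case False
    then have eq: "bullets A (C' # Cs) = bullet A C' (bullets A Cs)"
      by (cases Cs) simp_all
    have closed: "dsum_closed A C'" "dsum_closed A (bullets A Cs)"
      using Cons.prems(1) dsum_closed_bullets[OF False] by simp_all
    show ?thesis
    proof (cases "C = C'")
      case True
      then show ?thesis using subset_bullet_left[OF closed assms] eq by simp
    next
      case False
      then have "C \<subseteq> bullets A Cs" using Cons by simp
      then show ?thesis using subset_bullet_right[OF closed assms] eq by simp
    qed
  qed
qed

lemma Max_ed_le_ed_bullets:
  assumes "ring A" "Cs \<noteq> []" "\<And>C. C \<in> set Cs \<Longrightarrow> dsum_closed A C"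
  shows "Max (ed A ` set Cs) \<le> ed A (bullets A Cs)"
proof -
  have "\<forall>e\<in>ed A ` set Cs. e \<le> ed A (bullets A Cs)"
    using ed_mono subset_bullets[OF assms(1,3)] by blast
  then show ?thesis using assms(2) by (subst Max_le_iff) auto
qed

lemma sum_list_map_enat:
  "(\<And>x. x \<in> set xs \<Longrightarrow> f x = enat (g x)) \<Longrightarrow> sum_list (map f xs) = enat (sum_list (map g xs))"
  by (induction xs) (simp_all add: zero_enat_def)

lemma ed_bullets_le_finite:
  assumes "ring A" "Cs \<noteq> []" "\<And>C. C \<in> set Cs \<Longrightarrow> ed A C = enat (n C)"
  shows "ed A (bullets A Cs) \<le> enat ((\<Sum>C\<leftarrow>Cs. n C) + (length Cs - 1))"
proof -
  have "\<forall>C\<in>set Cs. \<exists>T. T \<in> Amod A \<and> C \<subseteq> layer A T (n C + 1)"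
  proof
    fix C assume "C \<in> set Cs"
    from ed_enatE[OF assms(3)[OF this]]
    show "\<exists>T. T \<in> Amod A \<and> C \<subseteq> layer A T (n C + 1)" by blast
  qed
  from bchoice[OF this] obtain gen
    where gen: "\<forall>C\<in>set Cs. gen C \<in> Amod A \<and> C \<subseteq> layer A (gen C) (n C + 1)"
    by (elim exE)
  then have "finite (gen ` set Cs)" "gen ` set Cs \<subseteq> Amod A" by auto
  from common_generator[OF assms(1) this] obtain T
    where T: "T \<in> Amod A" "\<forall>T'\<in>gen ` set Cs. addc A {T'} \<subseteq> addc A {T}"
    by (elim bexE) (rule that)
  have "C \<subseteq> layer A T (Suc (n C))" if C: "C \<in> set Cs" for C
  proof -
    have "addc A {gen C} \<subseteq> addc A {T}" using T(2) C by blast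
    then have "layer A (gen C) (Suc (n C)) \<subseteq> layer A T (Suc (n C))"
      by (rule layer_mono_generator)
    then show ?thesis using gen C by auto
  qed
  then have "bullets A Cs \<subseteq> layer A T (\<Sum>C\<leftarrow>Cs. Suc (n C))"
    by (rule bullets_subset_layer[OF T(1) assms(1,2)])
  also have "(\<Sum>C\<leftarrow>Cs. Suc (n C)) = (\<Sum>C\<leftarrow>Cs. n C) + (length Cs - 1) + 1"
    using assms(2) by (simp add: sum_list_Suc)
  finally show ?thesis by (rule ed_le_enatI[OF T(1)])
qed

lemma ed_bullets_le:
  assumes "ring A" "Cs \<noteq> []"
  shows "ed A (bullets A Cs) \<le> sum_list (map (ed A) Cs) + enat (length Cs - 1)"
proof (cases "\<exists>C\<in>set Cs. ed A C = \<infinity>")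
  case True
  then obtain C where C: "C \<in> set Cs" "ed A C = \<infinity>" by blast
  have "ed A C \<le> sum_list (map (ed A) Cs)"
    using C(1) by (intro member_le_sum_list) auto
  then show ?thesis using C(2) by simp
next
  case False
  then have fin: "ed A C = enat (the_enat (ed A C))" if "C \<in> set Cs" for C
    using that by (cases "ed A C") auto
  show ?thesis
    using ed_bullets_le_finite[OF assms fin]
      sum_list_map_enat[of Cs "ed A" "\<lambda>C. the_enat (ed A C)", OF fin] by simp
qed

theorem corollary2p9:
  fixes A :: "'a ring" and Cs :: "'a amod set list"
  assumes "artin_algebra A"
    and "Cs \<noteq> []"
    and "\<forall>C\<in>set Cs. subcat A C"
  shows "Max (ed A ` set Cs) \<le> ed A (bullets A Cs) \<and>
         ed A (bullets A Cs) \<le> sum_list (map (ed A) Cs) + enat (length Cs - 1)"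
proof
  have "ring A" using assms(1) by (simp add: artin_algebra_def)
  then show "Max (ed A ` set Cs) \<le> ed A (bullets A Cs)"
    using Max_ed_le_ed_bullets assms(2,3) subcat_dsum_closed by metis
  show "ed A (bullets A Cs) \<le> sum_list (map (ed A) Cs) + enat (length Cs - 1)"
    using ed_bullets_le[OF \<open>ring A\<close> assms(2)] .
qed

end
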